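(* Let $\mathsf{K}$ be a finite simplicial complex with vertex set $P\subset\mathbb{R}^d$ and $p>0$, and let $\mathscr{M}$ and $\prec_\Omega$ be as constructed in the context; write the cycles of $\mathscr{M}$ as $\zeta_1\prec_\Omega\cdots\prec_\Omega\zeta_m$. Let $\zeta'_1,\dots,\zeta'_m$ be any $p$-cycles with $\operatorname{span}\{[\zeta'_1],\dots,[\zeta'_m]\}=H_p(\mathsf{K})$, indexed so that $r_P([\zeta'_i])<r_P([\zeta'_j])$ implies $i<j$. Then $r_P(\zeta_j)\le r_P([\zeta'_j])$ for all $1\le j\le m$.
   Context: All homology is with $\mathbb{Z}_2$ coefficients. For $v\in\mathbb{R}^d$ and a simplex $\sigma$, $r_v(\sigma)=\max_{x\text{ vertex of }\sigma}\|v-x\|_2$; for a nonzero chain $\zeta$, $r_v(\zeta)=\max_{\sigma\in\zeta}r_v(\sigma)$. Define $r_P(\zeta)=\min_{v\in P}r_v(\zeta)$ and $r_P([\zeta])=\min_{v\in P}\min_{\eta\in[\zeta]}r_v(\eta)$. For each $v\in P$, $\prec_v$ is a fixed total order on the simplices of $\mathsf{K}$ with $\sigma_1\prec_v\sigma_2$ whenever $\sigma_1$ is a proper face of $\sigma_2$ or $r_v(\sigma_1)<r_v(\sigma_2)$; for nonzero chains, $\zeta\prec_v\zeta'$ iff the $\prec_v$-largest simplex of $\zeta$ precedes that of $\zeta'$. $\mathcal{D}_v(\mathsf{K})$ is the simplexwise filtration adding simplices in $\prec_v$-order. Let $\zeta_{v,1}\prec_v\cdots\prec_v\zeta_{v,\beta}$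 be the essential $p$-cycles of $\mathcal{D}_v(\mathsf{K})$ computed by standard reduction (reduce the $\mathbb{Z}_2$ boundary matrix left to right by adding an earlier column with the same lowest-one row until all nonzero columns have distinct lowest ones, recording the column operations in $V$ starting from the identity; essential $p$-cycles are columns $V_i$ with $\sigma_i$ a $p$-simplex, reduced column $i$ zero, and $i$ not the lowest-one row of any nonzero reduced column). Let $\Omega=\{\zeta_{v,i}: v\in P,\ 1\le i\le\beta\}$, totally ordered by $\prec_\Omega$ so that $r_v(\zeta_{v,i})<r_{v'}(\zeta_{v',i'})$ implies $\zeta_{v,i}\prec_\Omega\zeta_{v',i'}$, and $\zeta_{v,i}\prec_v\zeta_{v,i'}$ implies $\zeta_{v,i}\prec_\Omega\zeta_{v,i'}$, with other ties broken arbitrarily. $\mathscr{M}$ is built by scanning $\Omega$ in $\prec_\Omega$-order, starting from $\mathscr{M}=\emptyset$, and adding a cycle $\zeta$ to $\mathscr{M}$ iff $[\zeta]$ is not in the span of the classes of the cycles already in $\mathscr{M}$. (Then $|\mathscr{M}|=m=\dim H_p(\mathsf{K})$.) *)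

theory Defs
  imports "HOL-Analysis.Analysis"
begin

definition simplicial_complex :: "'a set set \<Rightarrow> bool" where
  "simplicial_complex K \<longleftrightarrow> finite K \<and> (\<forall>\<sigma>\<in>K. finite \<sigma> \<and> \<sigma> \<noteq> {}) \<and>
     (\<forall>\<sigma>\<in>K. \<forall>\<tau>. \<tau> \<noteq> {} \<longrightarrow> \<tau> \<subseteq> \<sigma> \<longrightarrow> \<tau> \<in> K)"

definition simplices :: "'a set set \<Rightarrow> nat \<Rightarrow> 'a set set" where
  "simplices K p = {\<sigma>\<in>K. card \<sigma> = p + 1}"

text \<open>A Z2-chain is a (finite) set of simplices; addition is symmetric difference.\<close>
definition symdiff :: "'b set \<Rightarrow> 'b set \<Rightarrow> 'b set" where
  "symdiff A B = (A - B) \<union> (B - A)"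

definition chain_sum :: "'b set set \<Rightarrow> 'b set" where
  "chain_sum F = {x. odd (card {c\<in>F. x \<in> c})}"

definition is_facet :: "'a set \<Rightarrow> 'a set \<Rightarrow> bool" where
  "is_facet \<tau> \<sigma> \<longleftrightarrow> \<tau> \<noteq> {} \<and> \<tau> \<subset> \<sigma> \<and> card \<tau> + 1 = card \<sigma>"

definition bd :: "'a set set \<Rightarrow> 'a set set" where
  "bd c = {\<tau>. odd (card {\<sigma>\<in>c. is_facet \<tau> \<sigma>})}"

definition cycles :: "'a set set \<Rightarrow> nat \<Rightarrow> 'a set set set" where
  "cycles K p = {c. c \<subseteq> simplices K p \<and> bd c = {}}"

definition boundaries :: "'a set set \<Rightarrow> nat \<Rightarrow> 'a set set set" where
  "boundaries K p = {bd c | c. c \<subseteq> simplices K (p + 1)}"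

definition hclass :: "'a set set \<Rightarrow> nat \<Rightarrow> 'a set set \<Rightarrow> 'a set set set" where
  "hclass K p \<zeta> = {symdiff \<zeta> b | b. b \<in> boundaries K p}"

definition in_hspan :: "'a set set \<Rightarrow> nat \<Rightarrow> 'a set set \<Rightarrow> 'a set set set \<Rightarrow> bool" where
  "in_hspan K p \<zeta> S \<longleftrightarrow>
     (\<exists>F b. F \<subseteq> S \<and> finite F \<and> b \<in> boundaries K p \<and> \<zeta> = symdiff (chain_sum F) b)"

definition rv :: "'a::euclidean_space \<Rightarrow> 'a set \<Rightarrow> real" where
  "rv v \<sigma> = Max ((\<lambda>x. dist v x) ` \<sigma>)"

definition rv_chain :: "'a::euclidean_space \<Rightarrow> 'a set set \<Rightarrow> real" where
  "rv_chain v \<zeta> = Max ((\<lambda>\<sigma>. rv v \<sigma>) ` \<zeta>)"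

definition rP :: "'a::euclidean_space set \<Rightarrow> 'a set set \<Rightarrow> real" where
  "rP P \<zeta> = Min ((\<lambda>v. rv_chain v \<zeta>) ` P)"

definition rP_class :: "'a::euclidean_space set set \<Rightarrow> nat \<Rightarrow> 'a set \<Rightarrow> 'a set set \<Rightarrow> real" where
  "rP_class K p P \<zeta> = Min {rv_chain v \<eta> | v \<eta>. v \<in> P \<and> \<eta> \<in> hclass K p \<zeta> \<and> \<eta> \<noteq> {}}"

text \<open>Column j of the Z2 boundary matrix (as the set of its nonzero row indices).\<close>
definition bd_col :: "'a set list \<Rightarrow> nat \<Rightarrow> nat set" where
  "bd_col L j = {i. i < length L \<and> is_facet (L ! i) (L ! j)}"

text \<open>Reduce one column (pair: reduced column R_j, column V_j) against the already reduced
  earlier columns: while the column is nonzero and an earlier nonzero column has the same lowest one,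
  add that column. The fuel argument is large enough (each addition strictly lowers the low).\<close>
fun reduce_col :: "nat \<Rightarrow> (nat set \<times> nat set) list \<Rightarrow> nat set \<times> nat set \<Rightarrow> nat set \<times> nat set" where
  "reduce_col 0 prev c = c"
| "reduce_col (Suc k) prev (r, w) =
     (if r = {} then (r, w) else
      (case find (\<lambda>(r', w'). r' \<noteq> {} \<and> Max r' = Max r) prev of
         None \<Rightarrow> (r, w)
       | Some (r', w') \<Rightarrow> reduce_col k prev (symdiff r r', symdiff w w')))"

text \<open>Left-to-right reduction; V starts as the identity (column j = {j}).\<close>
fun reduction :: "nat \<Rightarrow> nat set list \<Rightarrow> (nat set \<times> nat set) list \<Rightarrow> (nat set \<times> nat set) list" where
  "reduction n [] acc = acc"
| "reduction n (c # cs) acc = reduction n cs (acc @ [reduce_col (n + 1) acc (c, {length acc})])"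

definition reduced :: "'a set list \<Rightarrow> (nat set \<times> nat set) list" where
  "reduced L = reduction (length L) (map (bd_col L) [0..<length L]) []"

definition ess_idx :: "'a set list \<Rightarrow> nat \<Rightarrow> nat list" where
  "ess_idx L p = filter (\<lambda>i. card (L ! i) = p + 1 \<and> fst (reduced L ! i) = {} \<and>
      i \<notin> {Max (fst c) | c. c \<in> set (reduced L) \<and> fst c \<noteq> {}}) [0..<length L]"

text \<open>The essential p-cycles V_i (as chains of simplices), listed in increasing order
  (the largest simplex of V_i is L!i, so this is the order of the filtration).\<close>
definition ess_cycles :: "'a set list \<Rightarrow> nat \<Rightarrow> 'a set set list" where
  "ess_cycles L p = map (\<lambda>i. (\<lambda>k. L ! k) ` snd (reduced L ! i)) (ess_idx L p)"

definition valid_filtration :: "'a::euclidean_space set set \<Rightarrow> 'a \<Rightarrow> 'a set list \<Rightarrow> bool" where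
  "valid_filtration K v L \<longleftrightarrow> distinct L \<and> set L = K \<and>
     (\<forall>i<length L. \<forall>j<length L. (L ! i \<subset> L ! j \<or> rv v (L ! i) < rv v (L ! j)) \<longrightarrow> i < j)"

text \<open>Om is a listing of \<Omega> (pairs (v,i) standing for \<zeta>_{v,i}, 0-indexed) in \<prec>_\<Omega> order.\<close>
definition valid_Omega_order ::
  "'a::euclidean_space set \<Rightarrow> ('a \<Rightarrow> 'a set set list) \<Rightarrow> ('a \<times> nat) list \<Rightarrow> bool" where
  "valid_Omega_order P Z Om \<longleftrightarrow> distinct Om \<and> set Om = {(v, i). v \<in> P \<and> i < length (Z v)} \<and>
     (\<forall>a<length Om. \<forall>b<length Om.
        (rv_chain (fst (Om ! a)) (Z (fst (Om ! a)) ! snd (Om ! a))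
           < rv_chain (fst (Om ! b)) (Z (fst (Om ! b)) ! snd (Om ! b))
         \<or> (fst (Om ! a) = fst (Om ! b) \<and> snd (Om ! a) < snd (Om ! b))) \<longrightarrow> a < b)"

fun greedy :: "'a set set \<Rightarrow> nat \<Rightarrow> 'a set set list \<Rightarrow> 'a set set list \<Rightarrow> 'a set set list" where
  "greedy K p acc [] = acc"
| "greedy K p acc (z # zs) = greedy K p (if in_hspan K p z (set acc) then acc else acc @ [z]) zs"

definition build_M ::
  "'a set set \<Rightarrow> nat \<Rightarrow> ('a \<Rightarrow> 'a set set list) \<Rightarrow> ('a \<times> nat) list \<Rightarrow> 'a set set list" where
  "build_M K p Z Om = greedy K p [] (map (\<lambda>(v, i). Z v ! i) Om)"

end

(*
  Fix j and put R = r_P([zeta'_j]).  Since the order on Omega refines the order by radius, the cycles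
  of Omega of radius at most R form a prefix of Omega, and the greedy scan of that prefix produces an
  initial segment M1 of M.  Each zeta'_i with i <= j has class radius at most R, so it is homologous to
  a nonzero cycle eta with r_v(eta) <= R for some v in P.  The standard reduction of D_v(K) writes eta
  as a boundary plus essential cycles zeta_{v,k} with r_v(zeta_{v,k}) <= r_v(eta) <= R, all of which lie
  in the prefix.  Hence [zeta'_1], ..., [zeta'_j] lie in the span of the classes of M1.  As the classes
  of M are independent and spanned by [zeta'_1], ..., [zeta'_m], a dimension count forces |M1| > j, so
  zeta_j belongs to M1 and has radius at most R at some vertex.
*)

theory Submission
  imports Defs "HOL-Library.Function_Algebras" "HOL-Library.Z2"
begin

declare add_bit_eq_xor[simp del] mult_bit_eq_and[simp del]  \<comment> \<open>keep bit arithmetic in ring form\<close>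

section \<open>Chains as vectors over GF(2)\<close>

text \<open>A chain (a set of simplices, or of filtration indices) is identified with its indicator
  vector \<open>vec_of\<close> in the GF(2)-vector space of bit-valued functions; symmetric difference
  becomes addition.\<close>

definition scale_bit :: "bit \<Rightarrow> ('x \<Rightarrow> bit) \<Rightarrow> ('x \<Rightarrow> bit)" where "scale_bit c f = (\<lambda>x. c * f x)"

interpretation F2: vector_space "scale_bit :: bit \<Rightarrow> ('x \<Rightarrow> bit) \<Rightarrow> _"
  by unfold_locales (auto simp: scale_bit_def fun_eq_iff algebra_simps)

lemma bit_add_self[simp]: "(x::bit) + x = 0" by (cases x) auto
lemma bit_fun_add_self[simp]: "(f::'x \<Rightarrow> bit) + f = 0" by (auto simp: fun_eq_iff)
lemma bit_fun_diff_eq_add: "(f::'x \<Rightarrow> bit) - g = f + g" by (auto simp: fun_eq_iff)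
lemma scale_bit_0[simp]: "scale_bit 0 f = 0" by (auto simp: scale_bit_def fun_eq_iff)
lemma scale_bit_1[simp]: "scale_bit 1 f = f" by (auto simp: scale_bit_def fun_eq_iff)

definition vec_of :: "'b set \<Rightarrow> 'b \<Rightarrow> bit" where "vec_of A = (\<lambda>x. of_bool (x \<in> A))"

lemma vec_of_empty[simp]: "vec_of {} = 0" by (auto simp: vec_of_def fun_eq_iff)
lemma vec_of_inject: "vec_of A = vec_of B \<Longrightarrow> A = B"
  by (auto simp: vec_of_def fun_eq_iff) (metis of_bool_eq_iff)+
lemma inj_vec_of: "inj vec_of" by (rule injI) (rule vec_of_inject)
lemma vec_of_symdiff: "vec_of (symdiff A B) = vec_of A + vec_of B"
  by (auto simp: vec_of_def fun_eq_iff symdiff_def)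

lemma sum_fun_apply: "(\<Sum>i\<in>A. (f i :: 'x \<Rightarrow> 'y::comm_monoid_add)) x = (\<Sum>i\<in>A. f i x)"
  by (induct A rule: infinite_finite_induct) auto

lemma of_nat_bit: "(of_nat n :: bit) = of_bool (odd n)"
  by (induct n) (auto simp: ac_simps)

lemma sum_of_bool_bit:
  "finite A \<Longrightarrow> (\<Sum>x\<in>A. (of_bool (P x) :: bit)) = of_bool (odd (card {x\<in>A. P x}))"
  by (simp add: of_nat_bit Collect_conj_eq Int_commute)

lemma vec_of_chain_sum: "finite F \<Longrightarrow> vec_of (chain_sum F) = (\<Sum>c\<in>F. vec_of c)"
proof -
  assume f: "finite F"
  show ?thesis
  proof
    fix x
    have "(\<Sum>c\<in>F. vec_of c) x = (\<Sum>c\<in>F. of_bool (x \<in> c))" by (simp add: sum_fun_apply vec_of_def)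
    also have "\<dots> = of_bool (odd (card {c\<in>F. x \<in> c}))" by (rule sum_of_bool_bit[OF f])
    finally show "vec_of (chain_sum F) x = (\<Sum>c\<in>F. vec_of c) x" by (simp add: vec_of_def chain_sum_def)
  qed
qed

lemma span_subset_span: "A \<subseteq> F2.span B \<Longrightarrow> F2.span A \<subseteq> F2.span B"
  by (rule F2.span_minimal) auto

lemma scale_bit_cases: "scale_bit c f = 0 \<or> scale_bit c f = f"
  by (cases c) auto

lemma Max_symdiff:
  assumes "finite A" "finite B" "A \<noteq> {}" "B \<noteq> {}" "Max A \<noteq> Max B"
  shows "symdiff A B \<noteq> {}" "Max (symdiff A B) = max (Max A) (Max B)"
proof -
  have "finite (symdiff A B)" using assms(1,2) by (simp add: symdiff_def)
  moreover have "max (Max A) (Max B) \<in> symdiff A B"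
    using assms Max_in[OF assms(1,3)] Max_in[OF assms(2,4)] Max_ge[OF assms(1)] Max_ge[OF assms(2)]
    unfolding symdiff_def max_def by (metis DiffI UnI1 UnI2 antisym)
  moreover have "y \<le> max (Max A) (Max B)" if "y \<in> symdiff A B" for y
    using that Max_ge[OF assms(1)] Max_ge[OF assms(2)] unfolding symdiff_def by (auto simp: le_max_iff_disj)
  ultimately show "symdiff A B \<noteq> {}" "Max (symdiff A B) = max (Max A) (Max B)"
    by (auto intro: Max_eqI)
qed

lemma Max_symdiff_less:
  assumes "finite A" "finite B" "A \<noteq> {}" "B \<noteq> {}" "Max A = Max B" "symdiff A B \<noteq> {}"
  shows "Max (symdiff A B) < Max A"
proof -
  have "y < Max A" if "y \<in> symdiff A B" for y
  proof -
    have "y \<le> Max A" using that assms(1,2,5) Max_ge[of A y] Max_ge[of B y] unfolding symdiff_def by auto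
    moreover have "y \<noteq> Max A" using that Max_in[OF assms(1,3)] Max_in[OF assms(2,4)] assms(5)
      unfolding symdiff_def by auto
    ultimately show ?thesis by simp
  qed
  moreover have "finite (symdiff A B)" using assms(1,2) by (simp add: symdiff_def)
  ultimately show ?thesis using assms(6) by (simp add: Max_less_iff)
qed

lemma Max_eq_Max_of_span:
  assumes "finite F"
  shows "(\<forall>A\<in>F. finite A \<and> A \<noteq> {}) \<Longrightarrow> inj_on Max F \<Longrightarrow> finite B \<Longrightarrow> B \<noteq> {} \<Longrightarrow>
    vec_of B \<in> F2.span (vec_of ` F) \<Longrightarrow> \<exists>A\<in>F. Max B = Max A"
  using assms
proof (induct F arbitrary: B rule: finite_induct)
  case empty
  then have "vec_of B = 0" by simp
  then have "B = {}" using vec_of_inject by (metis vec_of_empty)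
  then show ?case using empty by simp
next
  case (insert A F)
  have fa: "finite A" "A \<noteq> {}" using insert.prems by auto
  have hF: "\<forall>A\<in>F. finite A \<and> A \<noteq> {}" "inj_on Max F" using insert.prems by (auto simp: inj_on_insert)
  have mA: "\<forall>A'\<in>F. Max A' \<noteq> Max A" using insert.prems(2) insert.hyps(2) by (auto simp: inj_on_def)
  from insert.prems(5) obtain c where c: "vec_of B - scale_bit c (vec_of A) \<in> F2.span (vec_of ` F)"
    by (auto simp: F2.span_breakdown_eq)
  show ?case
  proof (cases "scale_bit c (vec_of A) = 0")
    case True
    then have "vec_of B \<in> F2.span (vec_of ` F)" using c unfolding True diff_zero by blast
    then show ?thesis using insert.hyps(3)[OF hF insert.prems(3,4)] by blast
  next
    case False
    then have "scale_bit c (vec_of A) = vec_of A" using scale_bit_cases by blast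
    then have s: "vec_of (symdiff B A) \<in> F2.span (vec_of ` F)" using c by (simp add: bit_fun_diff_eq_add vec_of_symdiff)
    show ?thesis
    proof (cases "Max B = Max A")
      case True then show ?thesis by blast
    next
      case False
      have fin: "finite (symdiff B A)" using fa insert.prems(3) by (simp add: symdiff_def)
      note sd = Max_symdiff[OF insert.prems(3) fa(1) insert.prems(4) fa(2) False]
      from insert.hyps(3)[OF hF fin sd(1) s] obtain A' where "A' \<in> F" "Max (symdiff B A) = Max A'" by blast
      moreover have "max (Max B) (Max A) = Max B \<or> max (Max B) (Max A) = Max A" by (simp add: max_def)
      ultimately show ?thesis using sd(2) mA by fastforce
    qed
  qed
qed

lemma bit_fun_add_cancel: "(a::'x\<Rightarrow>bit) + b + b = a" by (simp add: add.assoc)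

lemma symdiff_below:
  assumes "A \<subseteq> {..t}" "B \<subseteq> {..(t::nat)}" "t \<in> A" "t \<in> B"
  shows "symdiff A B \<subseteq> {..<t}"
proof
  fix x assume "x \<in> symdiff A B"
  then have "x \<le> t" "x \<noteq> t" using assms unfolding symdiff_def by auto
  then show "x \<in> {..<t}" by simp
qed

lemma sum_scale_bit: "finite A \<Longrightarrow> (\<Sum>c\<in>A. scale_bit (g c) (h c :: 'x \<Rightarrow> bit)) = (\<Sum>c\<in>{c\<in>A. g c = 1}. h c)"
proof -
  assume f: "finite A"
  have "(\<Sum>c\<in>A. scale_bit (g c) (h c)) = (\<Sum>c\<in>A. if g c = 1 then h c else 0)"
    by (intro sum.cong refl) (metis bit_not_one_iff scale_bit_0 scale_bit_1)
  also have "\<dots> = (\<Sum>c\<in>{c\<in>A. g c = 1}. h c)" by (rule sum.inter_filter[OF f, symmetric])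
  finally show ?thesis .
qed

section \<open>The boundary operator\<close>

lemma vec_of_bd: "finite c \<Longrightarrow> vec_of (bd c) = (\<Sum>\<sigma>\<in>c. vec_of (bd {\<sigma>}))"
proof -
  assume f: "finite c"
  have e: "{\<sigma>'\<in>{\<sigma>}. is_facet \<tau> \<sigma>'} = (if is_facet \<tau> \<sigma> then {\<sigma>} else {})" for \<tau> \<sigma> :: "'a set"
    by auto
  have b1: "bd {\<sigma>} = {\<tau>. is_facet \<tau> \<sigma>}" for \<sigma> :: "'a set"
    unfolding bd_def e by auto
  show ?thesis
  proof
    fix \<tau>
    have "(\<Sum>\<sigma>\<in>c. vec_of (bd {\<sigma>})) \<tau> = (\<Sum>\<sigma>\<in>c. of_bool (is_facet \<tau> \<sigma>))" by (simp add: sum_fun_apply vec_of_def b1)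
    also have "\<dots> = of_bool (odd (card {\<sigma>\<in>c. is_facet \<tau> \<sigma>}))" by (rule sum_of_bool_bit[OF f])
    finally show "vec_of (bd c) \<tau> = (\<Sum>\<sigma>\<in>c. vec_of (bd {\<sigma>})) \<tau>" by (simp add: vec_of_def bd_def)
  qed
qed

lemma bit_add_shift: "(a::bit) + b = (a + i) + (b + i)" by (cases a; cases b; cases i) simp_all

lemma sum_symdiff_bit:
  assumes "finite A" "finite B"
  shows "sum (f :: 'i \<Rightarrow> 'x \<Rightarrow> bit) (symdiff A B) = sum f A + sum f B"
proof -
  have e1: "A - (A \<inter> B) = A - B" "B - (A \<inter> B) = B - A" by auto
  have 1: "sum f A = sum f (A - B) + sum f (A \<inter> B)"
    using sum.subset_diff[of "A \<inter> B" A f] assms(1) unfolding e1 by auto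
  have 2: "sum f B = sum f (B - A) + sum f (A \<inter> B)"
    using sum.subset_diff[of "A \<inter> B" B f] assms(2) unfolding e1 by auto
  have 3: "sum f (symdiff A B) = sum f (A - B) + sum f (B - A)"
    unfolding symdiff_def by (rule sum.union_disjoint) (use assms in auto)
  show ?thesis unfolding 1 2 3 by (simp add: fun_eq_iff bit_add_shift[symmetric])
qed

lemma bd_symdiff: "finite a \<Longrightarrow> finite b \<Longrightarrow> bd (symdiff a b) = symdiff (bd a) (bd b)"
proof -
  assume fa: "finite a" and fb: "finite b"
  have fs: "finite (symdiff a b)" using fa fb by (simp add: symdiff_def)
  have "vec_of (bd (symdiff a b)) = sum (\<lambda>\<sigma>. vec_of (bd {\<sigma>})) (symdiff a b)" by (rule vec_of_bd[OF fs])
  also have "\<dots> = sum (\<lambda>\<sigma>. vec_of (bd {\<sigma>})) a + sum (\<lambda>\<sigma>. vec_of (bd {\<sigma>})) b" by (rule sum_symdiff_bit[OF fa fb])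
  also have "\<dots> = vec_of (symdiff (bd a) (bd b))" by (simp only: vec_of_symdiff vec_of_bd[OF fa] vec_of_bd[OF fb])
  finally show ?thesis by (rule vec_of_inject)
qed

lemma bd_empty[simp]: "bd {} = {}" by (auto simp: bd_def)

lemma facet_facet_even:
  assumes "finite \<sigma>"
  shows "even (card {\<tau>. is_facet \<tau> \<sigma> \<and> is_facet \<rho> \<tau>})"
proof (cases "{\<tau>. is_facet \<tau> \<sigma> \<and> is_facet \<rho> \<tau>} = {}")
  case True then show ?thesis unfolding True by simp
next
  case False
  then obtain \<tau>0 where t0: "is_facet \<tau>0 \<sigma>" "is_facet \<rho> \<tau>0" by auto
  have fr: "finite \<rho>" "finite \<tau>0" using t0 assms unfolding is_facet_def by (auto intro: finite_subset)
  have rs: "\<rho> \<subseteq> \<sigma>" "\<rho> \<noteq> {}" "card \<rho> + 2 = card \<sigma>" using t0 unfolding is_facet_def by auto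
  have cd: "card (\<sigma> - \<rho>) = 2" using rs assms by (simp add: card_Diff_subset fr)
  have eq: "{\<tau>. is_facet \<tau> \<sigma> \<and> is_facet \<rho> \<tau>} = (\<lambda>x. insert x \<rho>) ` (\<sigma> - \<rho>)"
  proof (intro equalityI subsetI)
    fix \<tau> assume "\<tau> \<in> {\<tau>. is_facet \<tau> \<sigma> \<and> is_facet \<rho> \<tau>}"
    then have h: "is_facet \<tau> \<sigma>" "is_facet \<rho> \<tau>" by auto
    then have ft: "finite \<tau>" using assms unfolding is_facet_def by (auto intro: finite_subset)
    have sub: "\<rho> \<subseteq> \<tau>" "card \<rho> + 1 = card \<tau>" "\<tau> \<subset> \<sigma>" using h unfolding is_facet_def by auto
    have fr': "finite \<rho>" using sub ft finite_subset by blast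
    have "card (\<tau> - \<rho>) = 1" using card_Diff_subset[OF fr' sub(1)] sub(2) by simp
    then obtain x where x: "\<tau> - \<rho> = {x}" by (auto simp: card_Suc_eq)
    then have "\<tau> = insert x \<rho>" using sub(1) by blast
    moreover have "x \<in> \<sigma> - \<rho>" using x sub(3) by blast
    ultimately show "\<tau> \<in> (\<lambda>x. insert x \<rho>) ` (\<sigma> - \<rho>)" by blast
  next
    fix \<tau> assume "\<tau> \<in> (\<lambda>x. insert x \<rho>) ` (\<sigma> - \<rho>)"
    then obtain x where x: "x \<in> \<sigma>" "x \<notin> \<rho>" "\<tau> = insert x \<rho>" by auto
    have c: "card \<tau> = card \<rho> + 1" using x fr by simp
    have "\<tau> \<subseteq> \<sigma>" using x rs by auto
    moreover have "\<tau> \<noteq> \<sigma>" using c rs by auto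
    ultimately show "\<tau> \<in> {\<tau>. is_facet \<tau> \<sigma> \<and> is_facet \<rho> \<tau>}"
      using x c rs unfolding is_facet_def by auto
  qed
  have "inj_on (\<lambda>x. insert x \<rho>) (\<sigma> - \<rho>)" by (rule inj_onI) (metis Diff_iff insertE insertI1)
  then show ?thesis unfolding eq using cd by (simp add: card_image)
qed

lemma bd_single: "bd {\<sigma>} = {\<tau>. is_facet \<tau> \<sigma>}"
proof -
  have e: "{\<sigma>'\<in>{\<sigma>}. is_facet \<tau> \<sigma>'} = (if is_facet \<tau> \<sigma> then {\<sigma>} else {})" for \<tau> by auto
  show ?thesis unfolding bd_def e by auto
qed

lemma bd_subset: "bd c \<subseteq> (\<Union>\<sigma>\<in>c. Pow \<sigma>)"
proof
  fix \<tau> assume "\<tau> \<in> bd c"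
  then have "{\<sigma>\<in>c. is_facet \<tau> \<sigma>} \<noteq> {}" unfolding bd_def by (metis (no_types) card.empty even_zero mem_Collect_eq)
  then show "\<tau> \<in> (\<Union>\<sigma>\<in>c. Pow \<sigma>)" by (auto simp: is_facet_def)
qed

lemma finite_bd: "finite c \<Longrightarrow> \<forall>\<sigma>\<in>c. finite \<sigma> \<Longrightarrow> finite (bd c)"
  by (rule finite_subset[OF bd_subset]) auto

lemma bd_bd_single: "finite \<sigma> \<Longrightarrow> bd (bd {\<sigma>}) = {}"
proof -
  assume f: "finite \<sigma>"
  have "{\<tau>\<in>bd {\<sigma>}. is_facet \<rho> \<tau>} = {\<tau>. is_facet \<tau> \<sigma> \<and> is_facet \<rho> \<tau>}" for \<rho>
    unfolding bd_single by auto
  then show ?thesis using facet_facet_even[OF f] unfolding bd_def[of "bd {\<sigma>}"] by auto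
qed

lemma insert_symdiff: "x \<notin> A \<Longrightarrow> insert x A = symdiff {x} A"
  by (auto simp: symdiff_def)

lemma bd_bd: "finite c \<Longrightarrow> \<forall>\<sigma>\<in>c. finite \<sigma> \<Longrightarrow> bd (bd c) = {}"
proof (induct c rule: finite_induct)
  case empty then show ?case by simp
next
  case (insert \<sigma> c)
  have f1: "finite (bd {\<sigma>})" "finite (bd c)" using insert by (auto intro!: finite_bd)
  have "bd (insert \<sigma> c) = symdiff (bd {\<sigma>}) (bd c)"
    unfolding insert_symdiff[OF insert(2)] using insert(1) by (simp add: bd_symdiff)
  then have "bd (bd (insert \<sigma> c)) = symdiff (bd (bd {\<sigma>})) (bd (bd c))"
    using f1 by (simp add: bd_symdiff)
  then show ?case using insert by (simp add: bd_bd_single symdiff_def)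
qed

section \<open>Boundaries and homology classes\<close>

lemma finite_simplices: "simplicial_complex K \<Longrightarrow> finite (simplices K q)"
  unfolding simplicial_complex_def simplices_def by auto

lemma finite_simplex: "simplicial_complex K \<Longrightarrow> \<sigma> \<in> simplices K q \<Longrightarrow> finite \<sigma>"
  unfolding simplicial_complex_def simplices_def by auto

lemma finite_chain: "simplicial_complex K \<Longrightarrow> c \<subseteq> simplices K q \<Longrightarrow> finite c"
  using finite_simplices finite_subset by blast

lemma boundaries_eq: "boundaries K p = bd ` Pow (simplices K (p + 1))"
  unfolding boundaries_def by auto

lemma finite_boundaries: "simplicial_complex K \<Longrightarrow> finite (boundaries K p)"
  unfolding boundaries_eq using finite_simplices by auto

lemma empty_boundary: "{} \<in> boundaries K p"
  unfolding boundaries_def by (auto intro: exI[of _ "{}"])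

lemma boundary_symdiff: "simplicial_complex K \<Longrightarrow> b1 \<in> boundaries K p \<Longrightarrow> b2 \<in> boundaries K p \<Longrightarrow>
  symdiff b1 b2 \<in> boundaries K p"
proof -
  assume sc: "simplicial_complex K" and b: "b1 \<in> boundaries K p" "b2 \<in> boundaries K p"
  then obtain c1 c2 where c: "b1 = bd c1" "c1 \<subseteq> simplices K (p+1)" "b2 = bd c2" "c2 \<subseteq> simplices K (p+1)"
    unfolding boundaries_def by blast
  have f: "finite c1" "finite c2" using c finite_chain[OF sc] by blast+
  have "symdiff b1 b2 = bd (symdiff c1 c2)" using c f by (simp add: bd_symdiff)
  moreover have "symdiff c1 c2 \<subseteq> simplices K (p+1)" using c unfolding symdiff_def by auto
  ultimately show ?thesis unfolding boundaries_def by blast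
qed

lemma boundariesD:
  assumes sc: "simplicial_complex K" and b: "b \<in> boundaries K p"
  shows "b \<subseteq> simplices K p" "finite b" "bd b = {}"
proof -
  obtain c where c: "b = bd c" "c \<subseteq> simplices K (p+1)" using b unfolding boundaries_def by blast
  have fc: "finite c" using c finite_chain[OF sc] by blast
  have fs: "\<forall>\<sigma>\<in>c. finite \<sigma>" using c finite_simplex[OF sc] by blast
  show "b \<subseteq> simplices K p"
  proof
    fix \<tau> assume "\<tau> \<in> b"
    then have "{\<sigma>\<in>c. is_facet \<tau> \<sigma>} \<noteq> {}" using c unfolding bd_def by (metis (no_types) card.empty even_zero mem_Collect_eq)
    then obtain \<sigma> where s: "\<sigma> \<in> c" "is_facet \<tau> \<sigma>" by blast
    then have "\<sigma> \<in> K" "card \<sigma> = p + 2" using c(2) by (auto simp: simplices_def)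
    moreover have "\<tau> \<noteq> {}" "\<tau> \<subseteq> \<sigma>" "card \<tau> + 1 = card \<sigma>" using s(2) unfolding is_facet_def by auto
    moreover have "\<forall>\<sigma>\<in>K. \<forall>\<tau>. \<tau> \<noteq> {} \<longrightarrow> \<tau> \<subseteq> \<sigma> \<longrightarrow> \<tau> \<in> K" using sc unfolding simplicial_complex_def by blast
    ultimately have "\<tau> \<in> K" "card \<tau> = p + 1" by auto
    then show "\<tau> \<in> simplices K p" unfolding simplices_def by simp
  qed
  then show "finite b" using finite_chain[OF sc] by blast
  show "bd b = {}" using c bd_bd[OF fc fs] by simp
qed

lemma subspace_vec_of_boundaries:
  assumes sc: "simplicial_complex K"
  shows "F2.subspace (vec_of ` boundaries K p)"
proof (rule F2.subspaceI)
  show "0 \<in> vec_of ` boundaries K p" using empty_boundary by (metis vec_of_empty image_eqI)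
next
  fix x y assume "x \<in> vec_of ` boundaries K p" "y \<in> vec_of ` boundaries K p"
  then obtain b1 b2 where "x = vec_of b1" "y = vec_of b2" "b1 \<in> boundaries K p" "b2 \<in> boundaries K p" by blast
  then show "x + y \<in> vec_of ` boundaries K p" using boundary_symdiff[OF sc] by (metis vec_of_symdiff image_eqI)
next
  fix c x assume "x \<in> vec_of ` boundaries K p"
  then show "scale_bit c x \<in> vec_of ` boundaries K p" using scale_bit_cases[of c x] empty_boundary by (metis vec_of_empty image_eqI)
qed

lemma span_vec_of_boundaries: "simplicial_complex K \<Longrightarrow> F2.span (vec_of ` boundaries K p) = vec_of ` boundaries K p"
  using subspace_vec_of_boundaries F2.span_eq_iff by blast

lemma in_hspan_iff:
  assumes sc: "simplicial_complex K" and fS: "finite S"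
  shows "in_hspan K p z S \<longleftrightarrow> vec_of z \<in> F2.span (vec_of ` S \<union> vec_of ` boundaries K p)"
proof
  assume "in_hspan K p z S"
  then obtain F b where Fb: "F \<subseteq> S" "finite F" "b \<in> boundaries K p" "z = symdiff (chain_sum F) b"
    unfolding in_hspan_def by blast
  have "vec_of z = (\<Sum>c\<in>F. vec_of c) + vec_of b" using Fb by (simp add: vec_of_symdiff vec_of_chain_sum)
  moreover have "(\<Sum>c\<in>F. vec_of c) \<in> F2.span (vec_of ` S \<union> vec_of ` boundaries K p)"
    using Fb by (intro F2.span_sum F2.span_base) auto
  moreover have "vec_of b \<in> F2.span (vec_of ` S \<union> vec_of ` boundaries K p)" using Fb by (intro F2.span_base) auto
  ultimately show "vec_of z \<in> F2.span (vec_of ` S \<union> vec_of ` boundaries K p)" by (metis F2.span_add)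
next
  assume "vec_of z \<in> F2.span (vec_of ` S \<union> vec_of ` boundaries K p)"
  then obtain x y where xy: "vec_of z = x + y" "x \<in> F2.span (vec_of ` S)" "y \<in> F2.span (vec_of ` boundaries K p)"
    unfolding F2.span_Un by blast
  obtain b where b: "b \<in> boundaries K p" "y = vec_of b" using xy(3) span_vec_of_boundaries[OF sc] by auto
  have fcS: "finite (vec_of ` S)" using fS by simp
  obtain g where g: "x = (\<Sum>u\<in>vec_of ` S. scale_bit (g u) u)" using xy(2) F2.span_finite[OF fcS] by auto
  have "x = (\<Sum>c\<in>S. scale_bit (g (vec_of c)) (vec_of c))"
    unfolding g by (rule sum.reindex[unfolded comp_def]) (meson inj_vec_of inj_on_subset subset_UNIV)
  also have "\<dots> = (\<Sum>c\<in>{c\<in>S. g (vec_of c) = 1}. vec_of c)" by (rule sum_scale_bit[OF fS])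
  also have "\<dots> = vec_of (chain_sum {c\<in>S. g (vec_of c) = 1})" using fS by (simp add: vec_of_chain_sum)
  finally have "vec_of z = vec_of (symdiff (chain_sum {c\<in>S. g (vec_of c) = 1}) b)" using xy(1) b by (simp add: vec_of_symdiff)
  then have "z = symdiff (chain_sum {c\<in>S. g (vec_of c) = 1}) b" by (rule vec_of_inject)
  moreover have "{c\<in>S. g (vec_of c) = 1} \<subseteq> S" by blast
  moreover have "finite {c\<in>S. g (vec_of c) = 1}" using fS by simp
  ultimately show "in_hspan K p z S" unfolding in_hspan_def using b(1) by blast
qed

lemma span_Un_basis:
  assumes "B0 \<subseteq> BV" "BV \<subseteq> F2.span B0"
  shows "F2.span (A \<union> BV) = F2.span (A \<union> B0)"
proof -
  have s1: "F2.span B0 \<subseteq> F2.span (A \<union> B0)" by (rule F2.span_mono) blast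
  have "A \<union> BV \<subseteq> F2.span (A \<union> B0)" using assms(2) s1 F2.span_superset[of "A \<union> B0"] by blast
  moreover have "A \<union> B0 \<subseteq> F2.span (A \<union> BV)" using assms(1) F2.span_superset[of "A \<union> BV"] by blast
  ultimately show ?thesis using span_subset_span[of "A \<union> BV" "A \<union> B0"] span_subset_span[of "A \<union> B0" "A \<union> BV"] by blast
qed

section \<open>Correctness of the standard reduction\<close>

definition reduced_column :: "'a set list \<Rightarrow> nat \<Rightarrow> nat set \<times> nat set \<Rightarrow> bool" where
  "reduced_column L j c \<longleftrightarrow> finite (snd c) \<and> snd c \<subseteq> {..j} \<and> j \<in> snd c \<and> fst c \<subseteq> {..<length L} \<and>
     vec_of (fst c) = (\<Sum>k\<in>snd c. vec_of (bd_col L k)) \<and> (\<forall>k\<in>snd c. card (L!k) = card (L!j))"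

definition reduction_inv :: "'a set list \<Rightarrow> (nat set \<times> nat set) list \<Rightarrow> bool" where
  "reduction_inv L acc \<longleftrightarrow> (\<forall>j<length acc. reduced_column L j (acc!j)) \<and>
     (\<forall>i<length acc. \<forall>j<length acc. i \<noteq> j \<longrightarrow> fst (acc!i) \<noteq> {} \<longrightarrow> fst (acc!j) \<noteq> {} \<longrightarrow>
        Max (fst (acc!i)) \<noteq> Max (fst (acc!j)))"

lemma sum_fun_nonzero_ex: "(\<Sum>k\<in>A. f k) x \<noteq> (0::bit) \<Longrightarrow> \<exists>k\<in>A. f k x \<noteq> 0"
  by (metis (mono_tags, lifting) sum.neutral sum_fun_apply)

lemma reduced_column_facet_card:
  assumes "reduced_column L j c" "x \<in> fst c"
  shows "card (L!x) + 1 = card (L!j)"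
proof -
  have "vec_of (fst c) x = 1" using assms(2) by (simp add: vec_of_def)
  moreover have "vec_of (fst c) = (\<Sum>k\<in>snd c. vec_of (bd_col L k))" using assms(1) unfolding reduced_column_def by blast
  ultimately have "(\<Sum>k\<in>snd c. vec_of (bd_col L k)) x \<noteq> 0" by simp
  from sum_fun_nonzero_ex[OF this] obtain k where k: "k \<in> snd c" "vec_of (bd_col L k) x \<noteq> 0" by blast
  then have "x \<in> bd_col L k" unfolding vec_of_def by (cases "x \<in> bd_col L k") auto
  then have "is_facet (L!x) (L!k)" by (simp add: bd_col_def)
  then have "card (L!x) + 1 = card (L!k)" by (simp add: is_facet_def)
  moreover have "card (L!k) = card (L!j)" using k(1) assms(1) unfolding reduced_column_def by blast
  ultimately show ?thesis by simp
qed

lemma reduced_columnD: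
  assumes "reduced_column L j c"
  shows "finite (snd c)" "snd c \<subseteq> {..j}" "j \<in> snd c" "fst c \<subseteq> {..<length L}"
    "vec_of (fst c) = (\<Sum>k\<in>snd c. vec_of (bd_col L k))" "\<And>k. k \<in> snd c \<Longrightarrow> card (L!k) = card (L!j)"
  using assms unfolding reduced_column_def by blast+

lemma reduced_columnI:
  assumes "finite (snd c)" "snd c \<subseteq> {..j}" "j \<in> snd c" "fst c \<subseteq> {..<length L}"
    "vec_of (fst c) = (\<Sum>k\<in>snd c. vec_of (bd_col L k))" "\<And>k. k \<in> snd c \<Longrightarrow> card (L!k) = card (L!j)"
  shows "reduced_column L j c"
  using assms unfolding reduced_column_def by blast

lemma reduced_column_add:
  assumes ci: "reduced_column L i (r', w')" and cj: "reduced_column L j (r, w)" and "i < j"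
    and "r \<noteq> {}" "r' \<noteq> {}" "Max r' = Max r"
  shows "reduced_column L j (symdiff r r', symdiff w w')"
proof -
  have fr: "finite r" "finite r'"
    using reduced_columnD(4)[OF ci] reduced_columnD(4)[OF cj] by (auto intro: finite_subset)
  have "Max r \<in> r" "Max r \<in> r'" using Max_in[OF fr(1)] Max_in[OF fr(2)] assms(4-6) by auto
  then have cardij: "card (L!i) = card (L!j)"
    using reduced_column_facet_card[OF ci] reduced_column_facet_card[OF cj] by fastforce
  have fw: "finite w" "finite w'" using reduced_columnD(1)[OF ci] reduced_columnD(1)[OF cj] by auto
  show ?thesis
  proof (rule reduced_columnI, simp_all only: fst_conv snd_conv)
    show "finite (symdiff w w')" using fw by (simp add: symdiff_def)
    show "symdiff w w' \<subseteq> {..j}" "j \<in> symdiff w w'"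
      using reduced_columnD(2,3)[OF ci] reduced_columnD(2,3)[OF cj] \<open>i < j\<close> unfolding symdiff_def by auto
    show "symdiff r r' \<subseteq> {..<length L}"
      using reduced_columnD(4)[OF ci] reduced_columnD(4)[OF cj] unfolding symdiff_def by auto
    show "vec_of (symdiff r r') = (\<Sum>k\<in>symdiff w w'. vec_of (bd_col L k))"
      using reduced_columnD(5)[OF ci] reduced_columnD(5)[OF cj] by (simp add: vec_of_symdiff sum_symdiff_bit[OF fw])
    show "card (L!k) = card (L!j)" if "k \<in> symdiff w w'" for k
      using that reduced_columnD(6)[OF ci, of k] reduced_columnD(6)[OF cj, of k] cardij
      unfolding symdiff_def by auto
  qed
qed

text \<open>The bound on the lowest one guarantees that the fuel of \<open>reduce_col\<close> never runs out on a
  nonzero column, since each column addition strictly lowers it.\<close>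

lemma reduce_col_correct:
  assumes "reduction_inv L prev" "j = length prev"
  shows "reduced_column L j (r, w) \<Longrightarrow> (r \<noteq> {} \<longrightarrow> Max r < k) \<Longrightarrow>
    reduced_column L j (reduce_col k prev (r, w)) \<and>
    (fst (reduce_col k prev (r, w)) = {} \<or>
      (\<forall>i<j. fst (prev!i) \<noteq> {} \<longrightarrow> Max (fst (prev!i)) \<noteq> Max (fst (reduce_col k prev (r, w)))))"
proof (induct k arbitrary: r w)
  case 0
  then show ?case by auto
next
  case (Suc k)
  show ?case
  proof (cases "r = {}")
    case True then show ?thesis using Suc by simp
  next
    case rne: False
    show ?thesis
    proof (cases "find (\<lambda>(r', w'). r' \<noteq> {} \<and> Max r' = Max r) prev")
      case None
      then have "\<forall>i<j. \<not> (fst (prev!i) \<noteq> {} \<and> Max (fst (prev!i)) = Max r)"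
        unfolding find_None_iff using assms(2) by (metis (mono_tags, lifting) case_prod_beta nth_mem)
      moreover have "reduce_col (Suc k) prev (r, w) = (r, w)" using None rne by simp
      ultimately show ?thesis using Suc.prems(1) by auto
    next
      case (Some a)
      obtain r' w' where a: "a = (r', w')" by (cases a)
      from Some[unfolded find_Some_iff] obtain i where i0: "i < length prev" "(\<lambda>(r', w'). r' \<noteq> {} \<and> Max r' = Max r) (prev!i)" "a = prev!i"
        by (elim exE conjE) (rule that)
      then have i: "i < length prev" "r' \<noteq> {}" "Max r' = Max r" "prev!i = (r', w')"
        using a by auto
      have ci: "reduced_column L i (r', w')" using assms(1) i(1,4) unfolding reduction_inv_def by (metis (no_types))
      have fr: "finite r" "finite r'"
        using reduced_columnD(4)[OF ci] reduced_columnD(4)[OF Suc.prems(1)] by (auto intro: finite_subset)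
      have c2: "reduced_column L j (symdiff r r', symdiff w w')"
        using reduced_column_add[OF ci Suc.prems(1)] i assms(2) rne by simp
      have mx: "symdiff r r' \<noteq> {} \<longrightarrow> Max (symdiff r r') < k"
      proof
        assume "symdiff r r' \<noteq> {}"
        then have "Max (symdiff r r') < Max r" using Max_symdiff_less[OF fr rne i(2)] i(3) by simp
        then show "Max (symdiff r r') < k" using Suc.prems(2) rne by simp
      qed
      have eq: "reduce_col (Suc k) prev (r, w) = reduce_col k prev (symdiff r r', symdiff w w')"
        using rne Some a by simp
      show ?thesis unfolding eq using Suc.hyps[OF c2 mx] .
    qed
  qed
qed

lemma reduced_column_init: "j < length L \<Longrightarrow> reduced_column L j (bd_col L j, {j})"
  unfolding reduced_column_def by (auto simp: bd_col_def)

lemma reduction_inv_snoc: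
  assumes inv: "reduction_inv L acc" and x: "reduced_column L (length acc) x"
    and low: "fst x = {} \<or> (\<forall>i<length acc. fst (acc!i) \<noteq> {} \<longrightarrow> Max (fst (acc!i)) \<noteq> Max (fst x))"
  shows "reduction_inv L (acc @ [x])"
  unfolding reduction_inv_def
proof (intro conjI allI impI)
  fix j assume "j < length (acc @ [x])"
  then show "reduced_column L j ((acc @ [x]) ! j)"
    using inv x unfolding reduction_inv_def by (auto simp: nth_append less_Suc_eq)
next
  fix i j assume h: "i < length (acc @ [x])" "j < length (acc @ [x])" "i \<noteq> j"
    "fst ((acc @ [x]) ! i) \<noteq> {}" "fst ((acc @ [x]) ! j) \<noteq> {}"
  consider "i < length acc" "j < length acc" | "i = length acc" "j < length acc"
    | "i < length acc" "j = length acc"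
    using h(1-3) by (auto simp: less_Suc_eq)
  then show "Max (fst ((acc @ [x]) ! i)) \<noteq> Max (fst ((acc @ [x]) ! j))"
  proof cases
    case 1 then show ?thesis using h inv unfolding reduction_inv_def by (simp add: nth_append)
  next
    case 2 then show ?thesis using h low by (simp add: nth_append) (metis)
  next
    case 3 then show ?thesis using h low by (simp add: nth_append)
  qed
qed

lemma reduction_correct:
  "reduction_inv L acc \<Longrightarrow> cs = map (bd_col L) [length acc..<length acc + length cs] \<Longrightarrow>
   length acc + length cs \<le> length L \<Longrightarrow>
   reduction_inv L (reduction (length L) cs acc) \<and> length (reduction (length L) cs acc) = length acc + length cs"
proof (induct cs arbitrary: acc)
  case Nil then show ?case by simp
next
  case (Cons c cs)
  let ?j = "length acc"
  have cj: "c = bd_col L ?j" and cs: "cs = map (bd_col L) [Suc ?j..<Suc ?j + length cs]"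
    using Cons.prems(2) by (simp_all add: upt_conv_Cons del: upt_Suc)
  have jl: "?j < length L" using Cons.prems(3) by simp
  define x where "x = reduce_col (length L + 1) acc (c, {?j})"
  have r: "reduced_column L ?j x \<and> (fst x = {} \<or> (\<forall>i<?j. fst (acc!i) \<noteq> {} \<longrightarrow> Max (fst (acc!i)) \<noteq> Max (fst x)))"
    unfolding x_def cj
    by (rule reduce_col_correct[OF Cons.prems(1) refl reduced_column_init[OF jl]])
       (use jl in \<open>auto simp: bd_col_def\<close>)
  have inv2: "reduction_inv L (acc @ [x])" using reduction_inv_snoc[OF Cons.prems(1)] r by blast
  have "reduction_inv L (reduction (length L) cs (acc @ [x])) \<and>
        length (reduction (length L) cs (acc @ [x])) = length (acc @ [x]) + length cs"
    by (rule Cons.hyps[OF inv2]) (use cs Cons.prems(3) in auto)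
  then show ?case unfolding x_def by simp
qed

lemma reduced_correct: "reduction_inv L (reduced L) \<and> length (reduced L) = length L"
  unfolding reduced_def using reduction_correct[of L "[]" "map (bd_col L) [0..<length L]"]
  by (simp add: reduction_inv_def)

section \<open>Cycles of a simplexwise filtration\<close>

locale filtration =
  fixes K :: "'a set set" and L :: "'a set list"
  assumes sc: "simplicial_complex K" and dist: "distinct L" and setL: "set L = K"
begin

abbreviation "n \<equiv> length L"
abbreviation "red \<equiv> reduced L"
definition D :: "nat \<Rightarrow> nat \<Rightarrow> bit" where "D k = vec_of (bd_col L k)"

lemma length_red: "length red = n" using reduced_correct by blast
lemma red_inv: "reduction_inv L red" using reduced_correct by blast
lemma red_reduced_column: "j < n \<Longrightarrow> reduced_column L j (red!j)" using red_inv length_red unfolding reduction_inv_def by auto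
lemma red_low_distinct: "i < n \<Longrightarrow> j < n \<Longrightarrow> fst (red!i) \<noteq> {} \<Longrightarrow> fst (red!j) \<noteq> {} \<Longrightarrow>
  Max (fst (red!i)) = Max (fst (red!j)) \<Longrightarrow> i = j"
  using red_inv length_red unfolding reduction_inv_def by metis

lemma nth_L_in_K: "k < n \<Longrightarrow> L!k \<in> K" using setL nth_mem by blast
lemma finite_nth_L: "k < n \<Longrightarrow> finite (L!k)" using sc nth_L_in_K unfolding simplicial_complex_def by blast

lemma facet_in_K: "\<sigma> \<in> K \<Longrightarrow> is_facet \<tau> \<sigma> \<Longrightarrow> \<tau> \<in> K"
  using sc unfolding simplicial_complex_def is_facet_def by blast

definition to_chain :: "(nat \<Rightarrow> bit) \<Rightarrow> ('a set \<Rightarrow> bit)" where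
  "to_chain x = (\<lambda>s. \<Sum>i<n. x i * of_bool (L!i = s))"

lemma to_chain_add: "to_chain (x + y) = to_chain x + to_chain y"
  unfolding to_chain_def by (rule ext) (simp add: algebra_simps sum.distrib)

lemma to_chain_scale: "to_chain (scale_bit c x) = scale_bit c (to_chain x)"
  unfolding to_chain_def scale_bit_def by (rule ext) (simp only: sum_distrib_left mult.assoc)

lemma to_chain_0: "to_chain 0 = 0"
  unfolding to_chain_def by (rule ext) simp

lemma to_chain_sum: "to_chain (sum f A) = (\<Sum>a\<in>A. to_chain (f a))"
proof (induct A rule: infinite_finite_induct)
  case (infinite A) then show ?case by (simp only: sum.infinite[OF infinite] to_chain_0)
next
  case empty then show ?case by (simp only: sum.empty to_chain_0)
next
  case (insert x F) then show ?case by (simp only: sum.insert[OF insert(1,2)] to_chain_add insert(3))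
qed

lemma to_chain_span: "x \<in> F2.span S \<Longrightarrow> to_chain x \<in> F2.span (to_chain ` S)"
proof (induct rule: F2.span_induct_alt)
  case base then show ?case by (metis to_chain_0 F2.span_zero)
next
  case (step c x y)
  have "to_chain (scale_bit c x + y) = scale_bit c (to_chain x) + to_chain y" by (simp add: to_chain_add to_chain_scale)
  moreover have "scale_bit c (to_chain x) \<in> F2.span (to_chain ` S)" using step by (intro F2.span_scale F2.span_base) auto
  ultimately show ?case using step(2) F2.span_add by metis
qed

lemma to_chain_vec_of: "A \<subseteq> {..<n} \<Longrightarrow> to_chain (vec_of A) = vec_of (nth L ` A)"
proof
  fix s assume A: "A \<subseteq> {..<n}"
  have "to_chain (vec_of A) s = (\<Sum>i\<in>{..<n}. of_bool (i \<in> A \<and> L!i = s))"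
    unfolding to_chain_def vec_of_def by (intro sum.cong) auto
  also have "\<dots> = of_bool (odd (card {i\<in>{..<n}. i \<in> A \<and> L!i = s}))" by (rule sum_of_bool_bit) simp
  also have "\<dots> = vec_of (nth L ` A) s"
  proof (cases "s \<in> nth L ` A")
    case True
    then obtain i0 where i0: "i0 \<in> A" "s = L!i0" by auto
    have "{i\<in>{..<n}. i \<in> A \<and> L!i = s} = {i0}"
      using i0 A dist by (auto simp: nth_eq_iff_index_eq)
    then show ?thesis using True by (simp add: vec_of_def)
  next
    case False
    then have e: "{i\<in>{..<n}. i \<in> A \<and> L!i = s} = {}" by auto
    show ?thesis using False unfolding e by (simp add: vec_of_def)
  qed
  finally show "to_chain (vec_of A) s = vec_of (nth L ` A) s" .
qed

lemma to_chain_nth: "j < n \<Longrightarrow> to_chain x (L!j) = x j"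
proof -
  assume j: "j < n"
  have "to_chain x (L!j) = (\<Sum>i\<in>{..<n}. if i = j then x i else 0)"
    unfolding to_chain_def using j dist by (intro sum.cong) (auto simp: nth_eq_iff_index_eq)
  also have "\<dots> = x j" using j by simp
  finally show ?thesis .
qed

lemma to_chain_eq_0: "to_chain x = 0 \<Longrightarrow> (\<forall>j. n \<le> j \<longrightarrow> x j = 0) \<Longrightarrow> x = 0"
proof
  fix j assume h: "to_chain x = 0" "\<forall>j. n \<le> j \<longrightarrow> x j = 0"
  show "x j = 0 j"
  proof (cases "j < n")
    case True then show ?thesis using to_chain_nth[OF True, of x] h(1) by simp
  next
    case False then show ?thesis using h(2) by simp
  qed
qed

lemma bd_single_nth: "k < n \<Longrightarrow> bd {L!k} = nth L ` bd_col L k"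
proof -
  assume k: "k < n"
  have "bd {L!k} = {\<tau>. is_facet \<tau> (L!k)}" by (rule bd_single)
  also have "\<dots> = nth L ` bd_col L k"
  proof (intro equalityI subsetI)
    fix \<tau> assume t: "\<tau> \<in> {\<tau>. is_facet \<tau> (L!k)}"
    then have "\<tau> \<in> set L" using facet_in_K[OF nth_L_in_K[OF k]] setL by auto
    then obtain i where "i < n" "L!i = \<tau>" by (auto simp: in_set_conv_nth)
    then show "\<tau> \<in> nth L ` bd_col L k" using t by (auto simp: bd_col_def)
  qed (auto simp: bd_col_def)
  finally show ?thesis .
qed

lemma vec_of_bd_image_nth: "W \<subseteq> {..<n} \<Longrightarrow> vec_of (bd (nth L ` W)) = to_chain (\<Sum>k\<in>W. D k)"
proof -
  assume W: "W \<subseteq> {..<n}"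
  have fW: "finite W" using W finite_subset by blast
  have inj: "inj_on (nth L) W" by (rule inj_on_nth[OF dist]) (use W in auto)
  have "vec_of (bd (nth L ` W)) = (\<Sum>\<sigma>\<in>nth L ` W. vec_of (bd {\<sigma>}))" by (rule vec_of_bd) (use fW in simp)
  also have "\<dots> = (\<Sum>k\<in>W. vec_of (bd {L!k}))" by (rule sum.reindex_cong[OF inj refl]) simp
  also have "\<dots> = (\<Sum>k\<in>W. to_chain (D k))"
  proof (rule sum.cong[OF refl])
    fix k assume "k \<in> W"
    then have k: "k < n" using W by auto
    have "bd_col L k \<subseteq> {..<n}" by (auto simp: bd_col_def)
    then show "vec_of (bd {L!k}) = to_chain (D k)" unfolding bd_single_nth[OF k] D_def by (simp only: to_chain_vec_of)
  qed
  also have "\<dots> = to_chain (\<Sum>k\<in>W. D k)" by (simp add: to_chain_sum)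
  finally show ?thesis .
qed

lemma sum_D_beyond: "j \<ge> n \<Longrightarrow> (\<Sum>k\<in>W. D k) j = 0"
  by (simp add: sum_fun_apply D_def vec_of_def bd_col_def)

lemma bd_red_column: "k < n \<Longrightarrow> bd (nth L ` snd (red!k)) = nth L ` fst (red!k)"
proof -
  assume k: "k < n"
  have c: "reduced_column L k (red!k)" by (rule red_reduced_column[OF k])
  have ws: "snd (red!k) \<subseteq> {..<n}" using reduced_columnD(2)[OF c] k by auto
  have "vec_of (bd (nth L ` snd (red!k))) = to_chain (\<Sum>k'\<in>snd (red!k). D k')" by (rule vec_of_bd_image_nth[OF ws])
  also have "\<dots> = to_chain (vec_of (fst (red!k)))" using reduced_columnD(5)[OF c] by (simp add: D_def)
  also have "\<dots> = vec_of (nth L ` fst (red!k))" by (rule to_chain_vec_of[OF reduced_columnD(4)[OF c]])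
  finally show ?thesis by (rule vec_of_inject)
qed

lemma sum_D_red_column: "k < n \<Longrightarrow> (\<Sum>i\<in>fst (red!k). D i) = 0"
proof -
  assume k: "k < n"
  have c: "reduced_column L k (red!k)" by (rule red_reduced_column[OF k])
  have W: "snd (red!k) \<subseteq> {..<n}" using reduced_columnD(2)[OF c] k by auto
  have "finite (nth L ` snd (red!k))" "\<forall>\<sigma>\<in>nth L ` snd (red!k). finite \<sigma>"
    using reduced_columnD(1)[OF c] W finite_nth_L by auto
  then have "bd (nth L ` fst (red!k)) = {}" using bd_red_column[OF k] bd_bd by metis
  then have "to_chain (\<Sum>i\<in>fst (red!k). D i) = 0"
    using vec_of_bd_image_nth[OF reduced_columnD(4)[OF c]] by simp
  then show ?thesis using to_chain_eq_0 sum_D_beyond by blast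
qed

lemma D_in_span_red: "i < n \<Longrightarrow> D i \<in> F2.span ((\<lambda>k. vec_of (fst (red!k))) ` {..i})"
proof (induct i rule: less_induct)
  case (less i)
  have c: "reduced_column L i (red!i)" by (rule red_reduced_column[OF less.prems])
  let ?w = "snd (red!i)"
  have fw: "finite ?w" and iw: "i \<in> ?w" and ws: "?w \<subseteq> {..i}" using reduced_columnD[OF c] by auto
  have e: "vec_of (fst (red!i)) = (\<Sum>k\<in>?w. D k)" using reduced_columnD(5)[OF c] by (simp add: D_def)
  also have "\<dots> = D i + (\<Sum>k\<in>?w - {i}. D k)" by (rule sum.remove[OF fw iw])
  finally have eqD: "D i = vec_of (fst (red!i)) + (\<Sum>k\<in>?w - {i}. D k)" by (simp add: bit_fun_add_cancel)
  have a1: "vec_of (fst (red!i)) \<in> F2.span ((\<lambda>k. vec_of (fst (red!k))) ` {..i})" by (intro F2.span_base) auto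
  have a2: "(\<Sum>k\<in>?w - {i}. D k) \<in> F2.span ((\<lambda>k. vec_of (fst (red!k))) ` {..i})"
  proof (rule F2.span_sum)
    fix k assume k: "k \<in> ?w - {i}"
    then have ki: "k < i" using ws by auto
    have "D k \<in> F2.span ((\<lambda>k. vec_of (fst (red!k))) ` {..k})" using less.hyps[OF ki] ki less.prems by simp
    also have "\<dots> \<subseteq> F2.span ((\<lambda>k. vec_of (fst (red!k))) ` {..i})" using ki by (intro F2.span_mono image_mono) auto
    finally show "D k \<in> F2.span ((\<lambda>k. vec_of (fst (red!k))) ` {..i})" .
  qed
  show ?case by (subst eqD) (rule F2.span_add[OF a1 a2])
qed

lemma ess_idx_iff: "s \<in> set (ess_idx L p) \<longleftrightarrow> s < n \<and> card (L!s) = p + 1 \<and> fst (red!s) = {} \<and>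
   s \<notin> {Max (fst c) | c. c \<in> set red \<and> fst c \<noteq> {}}"
  by (simp add: ess_idx_def)

definition cycle_gens :: "nat \<Rightarrow> nat \<Rightarrow> (nat \<Rightarrow> bit) set" where
  "cycle_gens p t = (\<lambda>s. vec_of (snd (red!s))) ` {s \<in> set (ess_idx L p). s < t} \<union>
     (\<lambda>k. vec_of (fst (red!k))) ` {k. k < n \<and> fst (red!k) \<noteq> {} \<and> card (L!k) = p + 2}"

lemma cycle_gens_mono: "t \<le> t' \<Longrightarrow> cycle_gens p t \<subseteq> cycle_gens p t'"
  unfolding cycle_gens_def by auto

lemma finite_red_fst: "k < n \<Longrightarrow> finite (fst (red!k))"
  using reduced_columnD(4)[OF red_reduced_column] finite_subset by blast

lemma red_column_not_in_span_earlier: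
  assumes t: "t < n" and r: "fst (red!t) \<noteq> {}"
  shows "vec_of (fst (red!t)) \<notin> F2.span ((\<lambda>k. vec_of (fst (red!k))) ` {..<t})"
proof
  assume in_span: "vec_of (fst (red!t)) \<in> F2.span ((\<lambda>k. vec_of (fst (red!k))) ` {..<t})"
  define F where "F = (\<lambda>k. fst (red!k)) ` {k. k < t \<and> fst (red!k) \<noteq> {}}"
  have "(\<lambda>k. vec_of (fst (red!k))) ` {..<t} \<subseteq> insert 0 (vec_of ` F)"
  proof (rule image_subsetI)
    fix k assume "k \<in> {..<t}"
    then show "vec_of (fst (red!k)) \<in> insert 0 (vec_of ` F)"
      unfolding F_def by (cases "fst (red!k) = {}") auto
  qed
  then have "vec_of (fst (red!t)) \<in> F2.span (vec_of ` F)"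
    using in_span F2.span_mono[of _ "insert 0 (vec_of ` F)"] by auto
  moreover have "finite F" "\<forall>A\<in>F. finite A \<and> A \<noteq> {}" unfolding F_def using t finite_red_fst by auto
  moreover have "inj_on Max F"
  proof (rule inj_onI)
    fix A1 A2 assume "A1 \<in> F" "A2 \<in> F" "Max A1 = Max A2"
    then obtain k1 k2 where "k1 < t" "k2 < t" "A1 = fst (red!k1)" "A2 = fst (red!k2)"
      "fst (red!k1) \<noteq> {}" "fst (red!k2) \<noteq> {}" unfolding F_def by blast
    then show "A1 = A2" using red_low_distinct[of k1 k2] t \<open>Max A1 = Max A2\<close> by simp
  qed
  ultimately obtain A where "A \<in> F" "Max (fst (red!t)) = Max A"
    using Max_eq_Max_of_span finite_red_fst[OF t] r by blast
  then obtain k where "k < t" "fst (red!k) \<noteq> {}" "Max (fst (red!t)) = Max (fst (red!k))"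
    unfolding F_def by auto
  then show False using red_low_distinct[of k t] t r by auto
qed

lemma red_column_empty_of_cycle:
  assumes W: "W \<subseteq> {..t}" "t \<in> W" and t: "t < n" and cycle: "(\<Sum>i\<in>W. D i) = 0"
  shows "fst (red!t) = {}"
proof (rule ccontr)
  assume r: "fst (red!t) \<noteq> {}"
  have c: "reduced_column L t (red!t)" by (rule red_reduced_column[OF t])
  let ?w = "snd (red!t)"
  have fw: "finite ?w" and "t \<in> ?w" "?w \<subseteq> {..t}" using reduced_columnD[OF c] by auto
  then have Y: "symdiff W ?w \<subseteq> {..<t}" using W by (intro symdiff_below)
  have "(\<Sum>i\<in>symdiff W ?w. D i) = (\<Sum>i\<in>W. D i) + (\<Sum>i\<in>?w. D i)"
    using W(1) fw by (intro sum_symdiff_bit) (auto intro: finite_subset)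
  also have "\<dots> = vec_of (fst (red!t))" using cycle reduced_columnD(5)[OF c] by (simp add: D_def)
  finally have sum_Y: "(\<Sum>i\<in>symdiff W ?w. D i) = vec_of (fst (red!t))" .
  have "(\<Sum>i\<in>symdiff W ?w. D i) \<in> F2.span ((\<lambda>k. vec_of (fst (red!k))) ` {..<t})"
  proof (rule F2.span_sum)
    fix y assume "y \<in> symdiff W ?w"
    then have y: "y < t" using Y by auto
    have "D y \<in> F2.span ((\<lambda>k. vec_of (fst (red!k))) ` {..y})" using D_in_span_red y t by simp
    also have "\<dots> \<subseteq> F2.span ((\<lambda>k. vec_of (fst (red!k))) ` {..<t})"
      using y by (intro F2.span_mono image_mono) auto
    finally show "D y \<in> F2.span ((\<lambda>k. vec_of (fst (red!k))) ` {..<t})" .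
  qed
  with sum_Y red_column_not_in_span_earlier[OF t r] show False by simp
qed

lemma red_low_of_not_ess:
  assumes t: "t < n" "card (L!t) = p + 1" "fst (red!t) = {}" "t \<notin> set (ess_idx L p)"
  obtains k where "k < n" "t \<in> fst (red!k)" "\<forall>i\<in>fst (red!k). i \<le> t" "card (L!k) = p + 2"
proof -
  have "t \<in> {Max (fst c) | c. c \<in> set red \<and> fst c \<noteq> {}}" using ess_idx_iff t by blast
  then obtain c where "c \<in> set red" "fst c \<noteq> {}" "Max (fst c) = t" by blast
  moreover obtain k where "k < n" "red!k = c" using \<open>c \<in> set red\<close> length_red by (metis in_set_conv_nth)
  ultimately have k: "k < n" "fst (red!k) \<noteq> {}" "Max (fst (red!k)) = t" by auto
  have fR: "finite (fst (red!k))" by (rule finite_red_fst[OF k(1)])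
  have tR: "t \<in> fst (red!k)" using k fR Max_in by blast
  moreover have "\<forall>i\<in>fst (red!k). i \<le> t" using k fR Max_ge by blast
  moreover have "card (L!k) = p + 2"
    using reduced_column_facet_card[OF red_reduced_column[OF k(1)] tR] t(2) by simp
  ultimately show ?thesis using that k(1) by blast
qed

lemma cycle_gen_with_max:
  assumes tn: "t < n" and ct: "card (L!t) = p + 1" and r_empty: "fst (red!t) = {}"
  obtains X where "X \<subseteq> {..t}" "t \<in> X" "\<forall>i\<in>X. i < n \<and> card (L!i) = p + 1" "(\<Sum>i\<in>X. D i) = 0"
    "vec_of X \<in> cycle_gens p (Suc t)"
proof (cases "t \<in> set (ess_idx L p)")
  case True
  have c: "reduced_column L t (red!t)" by (rule red_reduced_column[OF tn])
  show ?thesis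
  proof (rule that)
    show "snd (red!t) \<subseteq> {..t}" "t \<in> snd (red!t)" using reduced_columnD(2,3)[OF c] .
    show "\<forall>i\<in>snd (red!t). i < n \<and> card (L!i) = p + 1"
      using reduced_columnD(2,6)[OF c] tn ct by fastforce
    show "(\<Sum>i\<in>snd (red!t). D i) = 0" using reduced_columnD(5)[OF c] r_empty by (simp add: D_def)
    show "vec_of (snd (red!t)) \<in> cycle_gens p (Suc t)" using True by (auto simp: cycle_gens_def)
  qed
next
  case False
  then obtain k where k: "k < n" "t \<in> fst (red!k)" "\<forall>i\<in>fst (red!k). i \<le> t" "card (L!k) = p + 2"
    using red_low_of_not_ess tn ct r_empty by blast
  have ck: "reduced_column L k (red!k)" by (rule red_reduced_column[OF k(1)])
  show ?thesis
  proof (rule that)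
    show "fst (red!k) \<subseteq> {..t}" "t \<in> fst (red!k)" using k(2,3) by auto
    show "\<forall>i\<in>fst (red!k). i < n \<and> card (L!i) = p + 1"
      using reduced_columnD(4)[OF ck] reduced_column_facet_card[OF ck] k(4) by fastforce
    show "(\<Sum>i\<in>fst (red!k). D i) = 0" by (rule sum_D_red_column[OF k(1)])
    show "vec_of (fst (red!k)) \<in> cycle_gens p (Suc t)" using k by (auto simp: cycle_gens_def)
  qed
qed

lemma cycle_in_span_cycle_gens:
  assumes "W \<subseteq> {..<t}" "\<forall>i\<in>W. i < n \<and> card (L!i) = p + 1" "(\<Sum>i\<in>W. D i) = 0"
  shows "vec_of W \<in> F2.span (cycle_gens p t)"
  using assms
proof (induction t arbitrary: W)
  case 0
  then show ?case by (metis F2.span_zero lessThan_0 subset_empty vec_of_empty)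
next
  case (Suc t)
  have fW: "finite W" using Suc.prems(1) finite_subset by blast
  have IH: "vec_of W' \<in> F2.span (cycle_gens p (Suc t))"
    if "W' \<subseteq> {..<t}" "\<forall>i\<in>W'. i < n \<and> card (L!i) = p + 1" "(\<Sum>i\<in>W'. D i) = 0" for W'
    using Suc.IH[OF that] F2.span_mono[OF cycle_gens_mono[of t "Suc t"]] by auto
  show ?case
  proof (cases "t \<in> W")
    case False
    then have "W \<subseteq> {..<t}" using Suc.prems(1) by (auto simp: less_Suc_eq)
    then show ?thesis using Suc.prems(2,3) IH by blast
  next
    case tW: True
    have tn: "t < n" and ct: "card (L!t) = p + 1" using Suc.prems(2) tW by auto
    have W_t: "W \<subseteq> {..t}" using Suc.prems(1) by (auto simp: lessThan_Suc_atMost)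
    \<comment> \<open>cancel the top index t of W against a generator whose top index is t, then use the IH\<close>
    obtain X where X: "X \<subseteq> {..t}" "t \<in> X" "\<forall>i\<in>X. i < n \<and> card (L!i) = p + 1" "(\<Sum>i\<in>X. D i) = 0"
      "vec_of X \<in> cycle_gens p (Suc t)"
      using cycle_gen_with_max[OF tn ct red_column_empty_of_cycle[OF W_t tW tn Suc.prems(3)]] .
    have fX: "finite X" using X(1) finite_subset by blast
    have "vec_of (symdiff W X) \<in> F2.span (cycle_gens p (Suc t))"
    proof (rule IH)
      show "symdiff W X \<subseteq> {..<t}" using W_t X(1) tW X(2) by (rule symdiff_below)
      show "\<forall>i\<in>symdiff W X. i < n \<and> card (L!i) = p + 1" using Suc.prems(2) X(3) unfolding symdiff_def by blast
      show "(\<Sum>i\<in>symdiff W X. D i) = 0" unfolding sum_symdiff_bit[OF fW fX] Suc.prems(3) X(4) by simp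
    qed
    from F2.span_add[OF this F2.span_base[OF X(5)]] show ?thesis by (simp add: vec_of_symdiff bit_fun_add_cancel)
  qed
qed

lemma ess_cyclesE: "\<zeta> \<in> set (ess_cycles L p) \<Longrightarrow> \<exists>s. s \<in> set (ess_idx L p) \<and> \<zeta> = nth L ` snd (red!s)"
  unfolding ess_cycles_def by auto

lemma ess_cycles_cycles: "\<zeta> \<in> set (ess_cycles L p) \<Longrightarrow> \<zeta> \<in> cycles K p"
proof -
  assume "\<zeta> \<in> set (ess_cycles L p)"
  then obtain s where s: "s \<in> set (ess_idx L p)" "\<zeta> = nth L ` snd (red!s)" using ess_cyclesE by blast
  have sn: "s < n" "card (L!s) = p + 1" "fst (red!s) = {}" using s(1) ess_idx_iff by auto
  have c: "reduced_column L s (red!s)" by (rule red_reduced_column[OF sn(1)])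
  have "\<zeta> \<subseteq> simplices K p"
  proof
    fix \<sigma> assume "\<sigma> \<in> \<zeta>"
    then obtain k where "k \<in> snd (red!s)" "\<sigma> = L!k" using s by auto
    moreover then have "k < n" using reduced_columnD(2)[OF c] sn by auto
    ultimately show "\<sigma> \<in> simplices K p" using reduced_columnD(6)[OF c] sn nth_L_in_K by (auto simp: simplices_def)
  qed
  moreover have "bd \<zeta> = {}" using bd_red_column[OF sn(1)] sn(3) s(2) by simp
  ultimately show ?thesis by (simp add: cycles_def)
qed

lemma red_column_in_boundaries: "k < n \<Longrightarrow> card (L!k) = p + 2 \<Longrightarrow> nth L ` fst (red!k) \<in> boundaries K p"
proof -
  assume k: "k < n" "card (L!k) = p + 2"
  have c: "reduced_column L k (red!k)" by (rule red_reduced_column[OF k(1)])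
  have "nth L ` snd (red!k) \<subseteq> simplices K (p + 1)"
  proof
    fix \<sigma> assume "\<sigma> \<in> nth L ` snd (red!k)"
    then obtain k' where "k' \<in> snd (red!k)" "\<sigma> = L!k'" by auto
    moreover then have "k' < n" using reduced_columnD(2)[OF c] k by auto
    ultimately show "\<sigma> \<in> simplices K (p + 1)" using reduced_columnD(6)[OF c] k nth_L_in_K by (auto simp: simplices_def)
  qed
  then show ?thesis unfolding boundaries_def using bd_red_column[OF k(1)] by (metis (mono_tags, lifting) mem_Collect_eq)
qed

lemma cycle_index_set:
  assumes "\<eta> \<in> cycles K p"
  obtains W where "W \<subseteq> {..<n}" "\<eta> = nth L ` W" "\<forall>i\<in>W. card (L!i) = p + 1" "(\<Sum>k\<in>W. D k) = 0"
proof -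
  have es: "\<eta> \<subseteq> simplices K p" "bd \<eta> = {}" using assms by (auto simp: cycles_def)
  define W where "W = {i. i < n \<and> L!i \<in> \<eta>}"
  have Wn: "W \<subseteq> {..<n}" unfolding W_def by auto
  have etaW: "\<eta> = nth L ` W"
  proof (intro equalityI subsetI)
    fix \<sigma> assume s: "\<sigma> \<in> \<eta>"
    then have "\<sigma> \<in> set L" using es(1) setL by (auto simp: simplices_def)
    then obtain i where "i < n" "L!i = \<sigma>" by (auto simp: in_set_conv_nth)
    then show "\<sigma> \<in> nth L ` W" using s unfolding W_def by blast
  qed (auto simp: W_def)
  have "\<forall>i\<in>W. card (L!i) = p + 1" using es(1) unfolding W_def simplices_def by auto
  moreover have "to_chain (\<Sum>k\<in>W. D k) = 0" using vec_of_bd_image_nth[OF Wn] es(2) etaW by simp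
  then have "(\<Sum>k\<in>W. D k) = 0" using to_chain_eq_0 sum_D_beyond by blast
  ultimately show ?thesis using that Wn etaW by blast
qed

lemma to_chain_cycle_gens_subset:
  fixes f :: "'a set \<Rightarrow> real"
  assumes ford: "\<forall>i<n. \<forall>j<n. f (L!i) < f (L!j) \<longrightarrow> i < j" and t: "t < n"
  shows "to_chain ` cycle_gens p (Suc t)
    \<subseteq> vec_of ` {\<zeta> \<in> set (ess_cycles L p). Max (f ` \<zeta>) \<le> f (L!t)} \<union> vec_of ` boundaries K p"
proof
  fix y assume "y \<in> to_chain ` cycle_gens p (Suc t)"
  then consider (ess) s where "s \<in> set (ess_idx L p)" "s \<le> t" "y = to_chain (vec_of (snd (red!s)))"
    | (bd) k where "k < n" "card (L!k) = p + 2" "y = to_chain (vec_of (fst (red!k)))"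
    unfolding cycle_gens_def by auto
  then show "y \<in> vec_of ` {\<zeta> \<in> set (ess_cycles L p). Max (f ` \<zeta>) \<le> f (L!t)} \<union> vec_of ` boundaries K p"
  proof cases
    case ess
    have sn: "s < n" using ess(1) ess_idx_iff by blast
    have c: "reduced_column L s (red!s)" by (rule red_reduced_column[OF sn])
    let ?\<zeta> = "nth L ` snd (red!s)"
    have "snd (red!s) \<subseteq> {..<n}" using reduced_columnD(2)[OF c] sn by auto
    then have y: "y = vec_of ?\<zeta>" using ess(3) to_chain_vec_of by simp
    have "f \<sigma> \<le> f (L!t)" if \<sigma>: "\<sigma> \<in> ?\<zeta>" for \<sigma>
    proof -
      obtain k where k: "k \<in> snd (red!s)" "\<sigma> = L!k" using \<sigma> by auto
      then have "k \<le> t" using reduced_columnD(2)[OF c] ess(2) by auto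
      then show ?thesis using ford k t by (metis le_less_trans not_le)
    qed
    moreover have "finite ?\<zeta>" "?\<zeta> \<noteq> {}" using reduced_columnD(1,3)[OF c] by auto
    ultimately have "Max (f ` ?\<zeta>) \<le> f (L!t)" by simp
    moreover have "?\<zeta> \<in> set (ess_cycles L p)" using ess(1) unfolding ess_cycles_def by auto
    ultimately show ?thesis using y by blast
  next
    case bd
    have c: "reduced_column L k (red!k)" by (rule red_reduced_column[OF bd(1)])
    have "y = vec_of (nth L ` fst (red!k))" using bd(3) to_chain_vec_of[OF reduced_columnD(4)[OF c]] by simp
    then show ?thesis using red_column_in_boundaries[OF bd(1,2)] by blast
  qed
qed

lemma cycle_in_span_ess_cycles:
  fixes f :: "'a set \<Rightarrow> real"
  assumes ford: "\<forall>i<n. \<forall>j<n. f (L!i) < f (L!j) \<longrightarrow> i < j"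
    and eta: "\<eta> \<in> cycles K p" "\<eta> \<noteq> {}"
  shows "vec_of \<eta> \<in> F2.span (vec_of ` {\<zeta> \<in> set (ess_cycles L p). Max (f ` \<zeta>) \<le> Max (f ` \<eta>)} \<union> vec_of ` boundaries K p)"
proof -
  obtain W where W: "W \<subseteq> {..<n}" "\<eta> = nth L ` W" "\<forall>i\<in>W. card (L!i) = p + 1" "(\<Sum>k\<in>W. D k) = 0"
    using cycle_index_set[OF eta(1)] .
  have fW: "finite W" using W(1) finite_subset by blast
  define t where "t = Max W"
  have "W \<noteq> {}" using eta(2) W(2) by blast
  then have t: "t \<in> W" "W \<subseteq> {..<Suc t}"
    unfolding t_def using fW Max_in Max_ge by (blast, fastforce simp: less_Suc_eq_le)
  have tn: "t < n" using t W(1) by auto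
  have "vec_of W \<in> F2.span (cycle_gens p (Suc t))"
    by (rule cycle_in_span_cycle_gens[OF t(2)]) (use W in auto)
  then have "vec_of \<eta> \<in> F2.span (to_chain ` cycle_gens p (Suc t))"
    using to_chain_span to_chain_vec_of[OF W(1)] W(2) by metis
  moreover have "f (L!t) \<le> Max (f ` \<eta>)" using t(1) W(2) fW by (simp add: Max_ge)
  then have "{\<zeta> \<in> set (ess_cycles L p). Max (f ` \<zeta>) \<le> f (L!t)}
      \<subseteq> {\<zeta> \<in> set (ess_cycles L p). Max (f ` \<zeta>) \<le> Max (f ` \<eta>)}" by auto
  then have "to_chain ` cycle_gens p (Suc t)
      \<subseteq> vec_of ` {\<zeta> \<in> set (ess_cycles L p). Max (f ` \<zeta>) \<le> Max (f ` \<eta>)} \<union> vec_of ` boundaries K p"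
    using to_chain_cycle_gens_subset[OF ford tn] by blast
  then have "F2.span (to_chain ` cycle_gens p (Suc t))
      \<subseteq> F2.span (vec_of ` {\<zeta> \<in> set (ess_cycles L p). Max (f ` \<zeta>) \<le> Max (f ` \<eta>)} \<union> vec_of ` boundaries K p)"
    by (rule F2.span_mono)
  ultimately show ?thesis by blast
qed

end

section \<open>The greedy selection\<close>

lemma greedy_append: "\<exists>ys. greedy K p acc xs = acc @ ys"
proof (induct xs arbitrary: acc)
  case Nil then show ?case by simp
next
  case (Cons z zs)
  obtain ys where "greedy K p (if in_hspan K p z (set acc) then acc else acc @ [z]) zs =
    (if in_hspan K p z (set acc) then acc else acc @ [z]) @ ys" using Cons by blast
  then show ?case by (cases "in_hspan K p z (set acc)") auto
qed

lemma greedy_set: "set (greedy K p acc xs) \<subseteq> set acc \<union> set xs"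
proof (induct xs arbitrary: acc)
  case Nil then show ?case by simp
next
  case (Cons z zs)
  have "set (greedy K p (if in_hspan K p z (set acc) then acc else acc @ [z]) zs) \<subseteq>
     set (if in_hspan K p z (set acc) then acc else acc @ [z]) \<union> set zs" by (rule Cons)
  moreover have "set (if in_hspan K p z (set acc) then acc else acc @ [z]) \<subseteq> set acc \<union> {z}" by auto
  ultimately show ?case by auto
qed

lemma greedy_split: "greedy K p acc (xs @ ys) = greedy K p (greedy K p acc xs) ys"
  by (induct xs arbitrary: acc) auto

context
  fixes K :: "'a set set" and p :: nat and B0 :: "('a set \<Rightarrow> bit) set"
  assumes sc: "simplicial_complex K"
    and B0: "B0 \<subseteq> vec_of ` boundaries K p" "vec_of ` boundaries K p \<subseteq> F2.span B0" "F2.independent B0"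
begin

lemma in_hspan_iff_basis: "finite S \<Longrightarrow> in_hspan K p z S \<longleftrightarrow> vec_of z \<in> F2.span (vec_of ` S \<union> B0)"
  using in_hspan_iff[OF sc] span_Un_basis[OF B0(1,2)] by blast

lemma greedy_span: "\<forall>x \<in> set acc \<union> set xs. vec_of x \<in> F2.span (vec_of ` set (greedy K p acc xs) \<union> B0)"
proof (induct xs arbitrary: acc)
  case Nil
  show ?case by (auto intro!: F2.span_base)
next
  case (Cons z zs)
  define acc' where "acc' = (if in_hspan K p z (set acc) then acc else acc @ [z])"
  have g: "greedy K p acc (z # zs) = greedy K p acc' zs" unfolding acc'_def by simp
  have IH: "\<forall>x\<in>set acc' \<union> set zs. vec_of x \<in> F2.span (vec_of ` set (greedy K p acc' zs) \<union> B0)" by (rule Cons)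
  have accs: "set acc \<subseteq> set acc'" unfolding acc'_def by auto
  have zin: "vec_of z \<in> F2.span (vec_of ` set (greedy K p acc' zs) \<union> B0)"
  proof (cases "in_hspan K p z (set acc)")
    case True
    then have "vec_of z \<in> F2.span (vec_of ` set acc \<union> B0)" using in_hspan_iff_basis[OF finite_set] by blast
    moreover have "vec_of ` set acc \<subseteq> F2.span (vec_of ` set (greedy K p acc' zs) \<union> B0)"
      using IH accs by blast
    moreover have "B0 \<subseteq> F2.span (vec_of ` set (greedy K p acc' zs) \<union> B0)"
      using F2.span_superset[of "vec_of ` set (greedy K p acc' zs) \<union> B0"] by blast
    ultimately show ?thesis using span_subset_span[of "vec_of ` set acc \<union> B0"] by blast
  next
    case False then have "z \<in> set acc'" unfolding acc'_def by simp
    then show ?thesis using IH by blast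
  qed
  show ?case unfolding g using IH accs zin by auto
qed

definition greedy_inv :: "'a set set list \<Rightarrow> bool" where
  "greedy_inv acc \<longleftrightarrow> F2.independent (vec_of ` set acc \<union> B0) \<and> card (vec_of ` set acc \<union> B0) = length acc + card B0"

lemma B0_finite: "finite B0" using B0(1) finite_boundaries[OF sc] finite_subset by blast

lemma greedy_inv_Nil: "greedy_inv []" unfolding greedy_inv_def using B0(3) by simp

lemma greedy_inv_greedy: "greedy_inv acc \<Longrightarrow> greedy_inv (greedy K p acc xs)"
proof (induct xs arbitrary: acc)
  case Nil then show ?case by simp
next
  case (Cons z zs)
  show ?case
  proof (cases "in_hspan K p z (set acc)")
    case True then show ?thesis using Cons by simp
  next
    case False
    then have nz: "vec_of z \<notin> F2.span (vec_of ` set acc \<union> B0)" using in_hspan_iff_basis[OF finite_set] by blast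
    then have nz2: "vec_of z \<notin> vec_of ` set acc \<union> B0" using F2.span_superset[of "vec_of ` set acc \<union> B0"] by blast
    have e: "vec_of ` set (acc @ [z]) \<union> B0 = insert (vec_of z) (vec_of ` set acc \<union> B0)" by auto
    have fin: "finite (vec_of ` set acc \<union> B0)" using B0_finite by simp
    have ind: "F2.independent (vec_of ` set acc \<union> B0)" and cd: "card (vec_of ` set acc \<union> B0) = length acc + card B0"
      using Cons.prems unfolding greedy_inv_def by auto
    have "F2.independent (insert (vec_of z) (vec_of ` set acc \<union> B0))" by (rule F2.independent_insertI[OF nz ind])
    moreover have "card (insert (vec_of z) (vec_of ` set acc \<union> B0)) = Suc (card (vec_of ` set acc \<union> B0))"
      using fin nz2 by simp
    ultimately have "greedy_inv (acc @ [z])" unfolding greedy_inv_def e using cd by simp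
    then show ?thesis using Cons.hyps False by simp
  qed
qed

lemma greedy_prefix_length:
  assumes inv: "greedy_inv (M1 @ ys)"
    and spanned: "\<forall>x\<in>set (M1 @ ys). vec_of x \<in> F2.span (vec_of ` set zs \<union> B0)"
    and len: "length zs = length (M1 @ ys)" and j: "j < length zs"
    and early: "\<forall>i\<le>j. vec_of (zs ! i) \<in> F2.span (vec_of ` set M1 \<union> B0)"
  shows "j < length M1"
proof (rule ccontr)
  assume short: "\<not> j < length M1"
  define S where "S = vec_of ` set M1 \<union> vec_of ` set (drop (Suc j) zs) \<union> B0"
  have c1: "card (vec_of ` set M1) \<le> length M1"
    using order_trans[OF card_image_le[OF finite_set] card_length] .
  have c2: "card (vec_of ` set (drop (Suc j) zs)) \<le> length zs - Suc j"
    using order_trans[OF card_image_le[OF finite_set] card_length, of vec_of "drop (Suc j) zs"] by simp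
  have "card S \<le> card (vec_of ` set M1) + card (vec_of ` set (drop (Suc j) zs)) + card B0"
    unfolding S_def using card_Un_le[of "vec_of ` set M1 \<union> vec_of ` set (drop (Suc j) zs)" B0]
      card_Un_le[of "vec_of ` set M1" "vec_of ` set (drop (Suc j) zs)"] by linarith
  moreover have "length zs = length M1 + length ys" using len by simp
  ultimately have card_S: "card S < length M1 + length ys + card B0"
    using c1 c2 short j by linarith
  have zs_S: "vec_of ` set zs \<subseteq> F2.span S"
  proof
    fix y assume "y \<in> vec_of ` set zs"
    then obtain i where i: "i < length zs" "y = vec_of (zs ! i)" by (auto simp: in_set_conv_nth)
    show "y \<in> F2.span S"
    proof (cases "i \<le> j")
      case True
      have "F2.span (vec_of ` set M1 \<union> B0) \<subseteq> F2.span S" unfolding S_def by (rule F2.span_mono) blast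
      then show ?thesis using early True i by blast
    next
      case False
      then have "zs ! i = drop (Suc j) zs ! (i - Suc j)" "i - Suc j < length (drop (Suc j) zs)"
        using i by simp_all
      then have "zs ! i \<in> set (drop (Suc j) zs)" by (metis nth_mem)
      then show ?thesis using i unfolding S_def by (intro F2.span_base) blast
    qed
  qed
  have "vec_of ` set zs \<union> B0 \<subseteq> F2.span S"
    using zs_S F2.span_superset[of S] unfolding S_def by blast
  then have "F2.span (vec_of ` set zs \<union> B0) \<subseteq> F2.span S" by (rule span_subset_span)
  then have "vec_of ` set (M1 @ ys) \<union> B0 \<subseteq> F2.span S"
    using spanned F2.span_superset[of S] unfolding S_def by blast
  moreover have "finite S" unfolding S_def using B0_finite by blast
  ultimately have "card (vec_of ` set (M1 @ ys) \<union> B0) \<le> card S"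
    using inv F2.independent_span_bound unfolding greedy_inv_def by blast
  with inv card_S show False unfolding greedy_inv_def by simp
qed

end

section \<open>The order on Omega and the main theorem\<close>

lemma filtration_of_valid: "simplicial_complex K \<Longrightarrow> valid_filtration K v L \<Longrightarrow> filtration K L"
  unfolding filtration_def valid_filtration_def by blast

lemma valid_filtration_radius_order:
  "valid_filtration K v L \<Longrightarrow> \<forall>i<length L. \<forall>j<length L. rv v (L!i) < rv v (L!j) \<longrightarrow> i < j"
  unfolding valid_filtration_def by blast

lemma cycle_symdiff_boundary:
  assumes sc: "simplicial_complex K" and z: "z \<in> cycles K p" and b: "b \<in> boundaries K p"
  shows "symdiff z b \<in> cycles K p"
proof -
  have z': "z \<subseteq> simplices K p" "bd z = {}" using z by (auto simp: cycles_def)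
  have b': "b \<subseteq> simplices K p" "finite b" "bd b = {}" using boundariesD[OF sc b] by auto
  have "bd (symdiff z b) = symdiff (bd z) (bd b)"
    using z'(1) b'(2) finite_chain[OF sc] by (simp add: bd_symdiff)
  then show ?thesis using z' b' unfolding cycles_def symdiff_def by auto
qed

lemma rP_class_attained:
  assumes sc: "simplicial_complex K" and P: "finite P" "P \<noteq> {}" and z: "z \<in> cycles K p" "z \<noteq> {}"
  obtains v b where "v \<in> P" "b \<in> boundaries K p" "symdiff z b \<noteq> {}"
    "rv_chain v (symdiff z b) = rP_class K p P z"
proof -
  define S where "S = {rv_chain v \<eta> | v \<eta>. v \<in> P \<and> \<eta> \<in> hclass K p z \<and> \<eta> \<noteq> {}}"
  have hclass_eq: "hclass K p z = (\<lambda>b. symdiff z b) ` boundaries K p" unfolding hclass_def by auto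
  have "z \<in> hclass K p z" using empty_boundary unfolding hclass_eq by (force simp: symdiff_def)
  then have "S \<noteq> {}" unfolding S_def using P(2) z(2) by blast
  moreover have "finite S"
  proof (rule finite_subset)
    show "S \<subseteq> (\<lambda>(v, \<eta>). rv_chain v \<eta>) ` (P \<times> hclass K p z)" unfolding S_def by force
    show "finite ((\<lambda>(v, \<eta>). rv_chain v \<eta>) ` (P \<times> hclass K p z))"
      using P(1) finite_boundaries[OF sc] unfolding hclass_eq by simp
  qed
  ultimately have "Min S \<in> S" by (rule Min_in[rotated])
  then obtain v \<eta> where v\<eta>: "v \<in> P" "\<eta> \<in> hclass K p z" "\<eta> \<noteq> {}" "Min S = rv_chain v \<eta>"
    unfolding S_def by blast
  moreover obtain b where "b \<in> boundaries K p" "\<eta> = symdiff z b" using v\<eta>(2) unfolding hclass_eq by blast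
  moreover have "rP_class K p P z = Min S" unfolding rP_class_def S_def ..
  ultimately show ?thesis using that by metis
qed

lemma takeWhile_key_le:
  fixes g :: "'a \<Rightarrow> 'b::linorder"
  assumes sorted: "\<forall>a<length xs. \<forall>b<length xs. g (xs ! a) < g (xs ! b) \<longrightarrow> a < b"
    and x: "x \<in> set xs" "g x \<le> R"
  shows "x \<in> set (takeWhile (\<lambda>y. g y \<le> R) xs)"
proof -
  obtain a where a: "a < length xs" "xs ! a = x" using x(1) by (auto simp: in_set_conv_nth)
  define q where "q = length (takeWhile (\<lambda>y. g y \<le> R) xs)"
  have "a < q"
  proof (rule ccontr)
    assume "\<not> a < q"
    then have q: "q < length xs" using a(1) by simp
    then have "\<not> g (xs ! q) \<le> R" unfolding q_def by (rule nth_length_takeWhile)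
    then have "g (xs ! a) < g (xs ! q)" using a(2) x(2) by (simp add: not_le le_less_trans)
    then have "a < q" using sorted a(1) q by blast
    with \<open>\<not> a < q\<close> show False ..
  qed
  then show ?thesis using a unfolding q_def by (metis nth_mem takeWhile_nth)
qed

definition Omega_cycle :: "('a \<Rightarrow> 'a set set list) \<Rightarrow> 'a \<times> nat \<Rightarrow> 'a set set" where
  "Omega_cycle Z = (\<lambda>(v, i). Z v ! i)"

definition Omega_radius :: "('a::euclidean_space \<Rightarrow> 'a set set list) \<Rightarrow> 'a \<times> nat \<Rightarrow> real" where
  "Omega_radius Z = (\<lambda>(v, i). rv_chain v (Z v ! i))"

lemma build_M_eq_greedy: "build_M K p Z Om = greedy K p [] (map (Omega_cycle Z) Om)"
  by (simp add: build_M_def Omega_cycle_def)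

context
  fixes K :: "'a::euclidean_space set set" and P :: "'a set" and p :: nat
    and L :: "'a \<Rightarrow> 'a set list" and Om :: "('a \<times> nat) list"
  assumes sc: "simplicial_complex K" and P: "P = \<Union>K"
    and filtrations: "\<forall>v\<in>P. valid_filtration K v (L v)"
    and Omega: "valid_Omega_order P (\<lambda>v. ess_cycles (L v) p) Om"
begin

abbreviation "ess_family \<equiv> \<lambda>v. ess_cycles (L v) p"

abbreviation Omega_prefix :: "real \<Rightarrow> ('a \<times> nat) list" where
  "Omega_prefix R \<equiv> takeWhile (\<lambda>x. Omega_radius ess_family x \<le> R) Om"

lemma finite_P: "finite P"
  using sc unfolding P simplicial_complex_def by auto

lemma set_Omega: "set Om = {(v, i). v \<in> P \<and> i < length (ess_family v)}"
  using Omega unfolding valid_Omega_order_def by blast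

lemma Omega_cycle_cycles: "x \<in> set Om \<Longrightarrow> Omega_cycle ess_family x \<in> cycles K p"
  using set_Omega filtrations filtration.ess_cycles_cycles[OF filtration_of_valid[OF sc]]
  by (auto simp: Omega_cycle_def)

lemma set_build_M_cycles: "set (build_M K p ess_family Om) \<subseteq> cycles K p"
  using greedy_set[of K p "[]" "map (Omega_cycle ess_family) Om"] Omega_cycle_cycles
  unfolding build_M_eq_greedy by auto

lemma Omega_radius_sorted:
  "\<forall>a<length Om. \<forall>b<length Om. Omega_radius ess_family (Om ! a) < Omega_radius ess_family (Om ! b) \<longrightarrow> a < b"
proof (intro allI impI)
  fix a b assume "a < length Om" "b < length Om" "Omega_radius ess_family (Om ! a) < Omega_radius ess_family (Om ! b)"
  then show "a < b"
    using Omega unfolding valid_Omega_order_def Omega_radius_def case_prod_beta by blast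
qed

lemma ess_cycle_in_Omega_prefix:
  assumes v: "v \<in> P" and \<zeta>: "\<zeta> \<in> set (ess_family v)" "rv_chain v \<zeta> \<le> R"
  shows "\<zeta> \<in> Omega_cycle ess_family ` set (Omega_prefix R)"
proof -
  obtain i where i: "i < length (ess_family v)" "\<zeta> = ess_family v ! i" using \<zeta>(1) by (auto simp: in_set_conv_nth)
  have "(v, i) \<in> set Om" using set_Omega v i(1) by simp
  moreover have "Omega_radius ess_family (v, i) \<le> R" using i(2) \<zeta>(2) by (simp add: Omega_radius_def)
  ultimately have "(v, i) \<in> set (Omega_prefix R)" by (rule takeWhile_key_le[OF Omega_radius_sorted])
  moreover have "Omega_cycle ess_family (v, i) = \<zeta>" using i(2) by (simp add: Omega_cycle_def)
  ultimately show ?thesis by (metis image_eqI)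
qed

lemma rP_le_of_Omega_prefix:
  assumes "\<zeta> \<in> Omega_cycle ess_family ` set (Omega_prefix R)"
  shows "rP P \<zeta> \<le> R"
proof -
  obtain v i where vi: "(v, i) \<in> set (Omega_prefix R)" "\<zeta> = ess_family v ! i"
    using assms by (auto simp: Omega_cycle_def)
  have v: "v \<in> P" using set_takeWhileD[OF vi(1)] set_Omega by auto
  have "rP P \<zeta> \<le> rv_chain v \<zeta>"
    unfolding rP_def using finite_P v by (intro Min_le) auto
  also have "\<dots> \<le> R" using set_takeWhileD[OF vi(1)] vi(2) by (simp add: Omega_radius_def)
  finally show ?thesis .
qed

lemma cycle_in_span_Omega_prefix:
  assumes z: "z \<in> cycles K p" and R: "rP_class K p P z \<le> R"
  shows "vec_of z \<in> F2.span (vec_of ` Omega_cycle ess_family ` set (Omega_prefix R) \<union> vec_of ` boundaries K p)"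
    (is "_ \<in> F2.span ?G")
proof (cases "z \<in> boundaries K p")
  case True then show ?thesis by (intro F2.span_base) blast
next
  case False
  then have "z \<noteq> {}" using empty_boundary by blast
  then obtain \<sigma> where "\<sigma> \<in> z" by blast
  then have "\<sigma> \<in> K" "\<sigma> \<noteq> {}" using z sc by (auto simp: cycles_def simplices_def simplicial_complex_def)
  then have "P \<noteq> {}" unfolding P by blast
  with \<open>z \<noteq> {}\<close> obtain v b where v: "v \<in> P" and b: "b \<in> boundaries K p"
    and \<eta>: "symdiff z b \<noteq> {}" "rv_chain v (symdiff z b) = rP_class K p P z"
    using rP_class_attained[OF sc finite_P _ z] by metis
  let ?\<eta> = "symdiff z b"
  let ?E = "{\<zeta> \<in> set (ess_family v). Max (rv v ` \<zeta>) \<le> Max (rv v ` ?\<eta>)}"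
  have filt: "filtration K (L v)" "valid_filtration K v (L v)"
    using filtrations v filtration_of_valid[OF sc] by auto
  have "vec_of ?\<eta> \<in> F2.span (vec_of ` ?E \<union> vec_of ` boundaries K p)"
    by (rule filtration.cycle_in_span_ess_cycles[OF filt(1) valid_filtration_radius_order[OF filt(2)]
          cycle_symdiff_boundary[OF sc z b] \<eta>(1)])
  moreover have "?E \<subseteq> Omega_cycle ess_family ` set (Omega_prefix R)"
  proof
    fix \<zeta> assume "\<zeta> \<in> ?E"
    then have "\<zeta> \<in> set (ess_family v)" "rv_chain v \<zeta> \<le> R"
      using \<eta>(2) R unfolding rv_chain_def by auto
    then show "\<zeta> \<in> Omega_cycle ess_family ` set (Omega_prefix R)" by (rule ess_cycle_in_Omega_prefix[OF v])
  qed
  then have "F2.span (vec_of ` ?E \<union> vec_of ` boundaries K p) \<subseteq> F2.span ?G"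
    by (intro F2.span_mono) blast
  ultimately have "vec_of ?\<eta> \<in> F2.span ?G" by blast
  moreover have "vec_of b \<in> F2.span ?G" using b by (intro F2.span_base) blast
  ultimately have "vec_of ?\<eta> + vec_of b \<in> F2.span ?G" by (rule F2.span_add)
  moreover have "vec_of ?\<eta> + vec_of b = vec_of z" by (simp add: vec_of_symdiff bit_fun_add_cancel)
  ultimately show ?thesis by simp
qed

lemma cycle_in_span_greedy_Omega_prefix:
  assumes B0: "B0 \<subseteq> vec_of ` boundaries K p" "vec_of ` boundaries K p \<subseteq> F2.span B0" "F2.independent B0"
    and z: "z \<in> cycles K p" "rP_class K p P z \<le> R"
  shows "vec_of z \<in> F2.span (vec_of ` set (greedy K p [] (map (Omega_cycle ess_family) (Omega_prefix R))) \<union> B0)"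
    (is "_ \<in> F2.span ?G")
proof -
  let ?pre = "map (Omega_cycle ess_family) (Omega_prefix R)"
  have "F2.span B0 \<subseteq> F2.span ?G" by (rule F2.span_mono) blast
  then have "vec_of ` set ?pre \<union> vec_of ` boundaries K p \<subseteq> F2.span ?G"
    using greedy_span[OF sc B0, of "[]" ?pre] B0(2) by auto
  moreover have "vec_of z \<in> F2.span (vec_of ` set ?pre \<union> vec_of ` boundaries K p)"
    using cycle_in_span_Omega_prefix[OF z] by simp
  ultimately show ?thesis using span_subset_span by blast
qed

lemma build_M_nth_in_Omega_prefix:
  assumes zs: "\<forall>z\<in>cycles K p. in_hspan K p z (set zs)" "length zs = length (build_M K p ess_family Om)"
    and j: "j < length zs" and early: "\<forall>i\<le>j. zs ! i \<in> cycles K p \<and> rP_class K p P (zs ! i) \<le> R"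
  shows "build_M K p ess_family Om ! j \<in> Omega_cycle ess_family ` set (Omega_prefix R)"
proof -
  obtain B0 where "B0 \<subseteq> vec_of ` boundaries K p" "F2.independent B0" "vec_of ` boundaries K p \<subseteq> F2.span B0"
    using F2.maximal_independent_subset[of "vec_of ` boundaries K p"] by blast
  then have B0: "B0 \<subseteq> vec_of ` boundaries K p" "vec_of ` boundaries K p \<subseteq> F2.span B0" "F2.independent B0"
    by simp_all
  define pre where "pre = map (Omega_cycle ess_family) (Omega_prefix R)"
  define M1 where "M1 = greedy K p [] pre"
  have "build_M K p ess_family Om
      = greedy K p M1 (map (Omega_cycle ess_family) (dropWhile (\<lambda>x. Omega_radius ess_family x \<le> R) Om))"
    unfolding build_M_eq_greedy M1_def pre_def by (metis greedy_split map_append takeWhile_dropWhile_id)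
  then obtain ys where M: "build_M K p ess_family Om = M1 @ ys" by (metis greedy_append)
  have "greedy_inv B0 (M1 @ ys)"
    using greedy_inv_greedy[OF sc B0 greedy_inv_Nil[OF sc B0]] unfolding M[symmetric] build_M_eq_greedy by blast
  moreover have "\<forall>x\<in>set (M1 @ ys). vec_of x \<in> F2.span (vec_of ` set zs \<union> B0)"
  proof
    fix x assume "x \<in> set (M1 @ ys)"
    then have "in_hspan K p x (set zs)" using set_build_M_cycles zs(1) unfolding M by blast
    then show "vec_of x \<in> F2.span (vec_of ` set zs \<union> B0)" using in_hspan_iff_basis[OF sc B0 finite_set] by blast
  qed
  moreover have "length zs = length (M1 @ ys)" using zs(2) unfolding M .
  moreover have "\<forall>i\<le>j. vec_of (zs ! i) \<in> F2.span (vec_of ` set M1 \<union> B0)"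
  proof (intro allI impI)
    fix i assume "i \<le> j"
    then show "vec_of (zs ! i) \<in> F2.span (vec_of ` set M1 \<union> B0)"
      using cycle_in_span_greedy_Omega_prefix[OF B0] early unfolding M1_def pre_def by simp
  qed
  ultimately have j_M1: "j < length M1" using greedy_prefix_length[OF sc B0] j by blast
  have "build_M K p ess_family Om ! j = M1 ! j" using j_M1 unfolding M by (simp add: nth_append)
  also have "\<dots> \<in> set pre" using greedy_set[of K p "[]" pre] nth_mem[OF j_M1] unfolding M1_def by auto
  finally show ?thesis unfolding pre_def by simp
qed

end

theorem mainTheorem4:
  fixes K :: "'a::euclidean_space set set" and P :: "'a set" and p :: nat
    and L :: "'a \<Rightarrow> 'a set list" and Om :: "('a \<times> nat) list"
    and zs' :: "'a set set list"
  assumes "simplicial_complex K"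
    and "P = \<Union>K"
    and "p > 0"
    and "\<forall>v\<in>P. valid_filtration K v (L v)"
    and "valid_Omega_order P (\<lambda>v. ess_cycles (L v) p) Om"
    and "length zs' = length (build_M K p (\<lambda>v. ess_cycles (L v) p) Om)"
    and "\<forall>z\<in>set zs'. z \<in> cycles K p"
    and "\<forall>z\<in>cycles K p. in_hspan K p z (set zs')"
    and "\<forall>i<length zs'. \<forall>j<length zs'.
           rP_class K p P (zs' ! i) < rP_class K p P (zs' ! j) \<longrightarrow> i < j"
  shows "\<forall>j<length zs'.
           rP P (build_M K p (\<lambda>v. ess_cycles (L v) p) Om ! j) \<le> rP_class K p P (zs' ! j)"
proof (intro allI impI)
  fix j assume j: "j < length zs'"
  define R where "R = rP_class K p P (zs' ! j)"
  have "\<forall>i\<le>j. zs' ! i \<in> cycles K p \<and> rP_class K p P (zs' ! i) \<le> R"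
    using assms(7,9) j unfolding R_def by (meson le_less_trans not_le nth_mem)
  then have "build_M K p (\<lambda>v. ess_cycles (L v) p) Om ! j
      \<in> Omega_cycle (\<lambda>v. ess_cycles (L v) p) ` set (takeWhile (\<lambda>x. Omega_radius (\<lambda>v. ess_cycles (L v) p) x \<le> R) Om)"
    using build_M_nth_in_Omega_prefix[OF assms(1,2,4,5,8,6) j] by blast
  then show "rP P (build_M K p (\<lambda>v. ess_cycles (L v) p) Om ! j) \<le> rP_class K p P (zs' ! j)"
    using rP_le_of_Omega_prefix[OF assms(1,2,4,5)] unfolding R_def by blast
qed

end
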